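(* Let $\psi\in\Psi$ satisfy $\lim_{t\to\infty}\frac{\psi(t\psi(t))}{\psi(t)}=1$ and let $\tau_\omega$ be a Connes–Dixmier trace on $M_\psi$. Then for every positive $x\in M_\psi$, $$\omega\Big(t\mapsto\frac{-1}{\psi(t)}\int_{1/t}^\infty\lambda\,dn_x(\lambda)\Big)\le\tau_\omega(x).$$
   Context: $\Psi$ is the class of concave increasing functions $\psi$ on $[0,\infty)$ with $\psi(\infty)=\infty$, $\psi(t)=O(t)$ as $t\to0$, $\psi(t)=o(t)$ as $t\to\infty$. For bounded measurable $x$ on $(0,\infty)$, $n_x(\lambda)=m(\{s:|x(s)|>\lambda\})$, $x^*$ is the nonincreasing right-continuous rearrangement of $|x|$, and $-\int_z^\infty\lambda\,dn_x(\lambda)=\int_0^{n_x(z)}x^*(s)ds$. $M_\psi$ is the space of bounded measurable $x$ with $\sup_{t>0}\frac1{\psi(t)}\int_0^tx^*(s)ds<\infty$. A generalised limit $\gamma$ on $L_\infty(0,\infty)$ is a positive linear functional with $\gamma(1)=1$ and $\gamma(y)=0$ whenever $y(t)\to0$. With $(My)(t)=\frac1{\log t}\int_1^t\frac{y(s)}sds$, a Connes–Dixmier trace on $M_\psi$ is $\tau_\omega(x)=\omega(t\mapsto\frac1{\psi(t)}\int_0^tx^*(s)ds)$, $0\le x\in M_\psi$, with $\omega=\gamma\circ M$ for some generalised limit $\gamma$ (additive on the positive cone). Values of functions of $t$ on a bounded initial interval do not affect $\omega$. *)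

theory Defs
  imports "HOL-Analysis.Analysis" "HOL-Library.Landau_Symbols"
begin

definition Psi_class :: "(real \<Rightarrow> real) \<Rightarrow> bool" where
  "Psi_class \<psi> \<longleftrightarrow> concave_on {0..} \<psi> \<and> mono_on {0..} \<psi> \<and>
     filterlim \<psi> at_top at_top \<and>
     \<psi> \<in> O[at_right 0](\<lambda>t. t) \<and> \<psi> \<in> o[at_top](\<lambda>t. t)"

text \<open>Bounded (Lebesgue) measurable functions on (0,infinity); values outside are irrelevant.\<close>
definition bmeas :: "(real \<Rightarrow> real) \<Rightarrow> bool" where
  "bmeas y \<longleftrightarrow> set_borel_measurable lebesgue {0<..} y \<and> bounded (y ` {0<..})"

definition distfun :: "(real \<Rightarrow> real) \<Rightarrow> real \<Rightarrow> ennreal" where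
  "distfun x l = emeasure lebesgue {s \<in> {0<..}. \<bar>x s\<bar> > l}"

definition rearr :: "(real \<Rightarrow> real) \<Rightarrow> real \<Rightarrow> real" where
  "rearr x t = Inf {l. 0 \<le> l \<and> distfun x l \<le> ennreal t}"

text \<open>The Lebesgue--Stieltjes integral  - int_z^infinity lambda d n_x(lambda):
  the measure -dn_x is the distribution of |x| (pushforward of Lebesgue measure on (0,infinity)).\<close>
definition stieltjes_tail :: "(real \<Rightarrow> real) \<Rightarrow> real \<Rightarrow> real" where
  "stieltjes_tail x z =
     (LINT l:{z<..}|(distr (restrict_space lebesgue {0<..}) borel (\<lambda>s. \<bar>x s\<bar>)). l)"

definition M_psi :: "(real \<Rightarrow> real) \<Rightarrow> (real \<Rightarrow> real) \<Rightarrow> bool" where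
  "M_psi \<psi> x \<longleftrightarrow> bmeas x \<and>
     bdd_above ((\<lambda>t. (1 / \<psi> t) * (LINT s:{0..t}|lborel. rearr x s)) ` {0<..})"

definition generalised_limit :: "((real \<Rightarrow> real) \<Rightarrow> real) \<Rightarrow> bool" where
  "generalised_limit \<gamma> \<longleftrightarrow>
     (\<forall>y z. bmeas y \<longrightarrow> bmeas z \<longrightarrow> \<gamma> (\<lambda>t. y t + z t) = \<gamma> y + \<gamma> z) \<and>
     (\<forall>y c. bmeas y \<longrightarrow> \<gamma> (\<lambda>t. c * y t) = c * \<gamma> y) \<and>
     (\<forall>y. bmeas y \<longrightarrow> (AE t in lebesgue. t > 0 \<longrightarrow> 0 \<le> y t) \<longrightarrow> 0 \<le> \<gamma> y) \<and>
     \<gamma> (\<lambda>t. 1) = 1 \<and>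
     (\<forall>y. bmeas y \<longrightarrow> (y \<longlongrightarrow> 0) at_top \<longrightarrow> \<gamma> y = 0)"

definition Mmean :: "(real \<Rightarrow> real) \<Rightarrow> real \<Rightarrow> real" where
  "Mmean y t = (if 1 < t then (1 / ln t) * (LINT s:{1..t}|lborel. y s / s) else 0)"

definition dixmier_omega :: "((real \<Rightarrow> real) \<Rightarrow> real) \<Rightarrow> (real \<Rightarrow> real) \<Rightarrow> real" where
  "dixmier_omega \<gamma> y = \<gamma> (Mmean y)"

definition dixmier_trace ::
  "((real \<Rightarrow> real) \<Rightarrow> real) \<Rightarrow> (real \<Rightarrow> real) \<Rightarrow> (real \<Rightarrow> real) \<Rightarrow> real" where
  "dixmier_trace \<gamma> \<psi> x =
     dixmier_omega \<gamma> (\<lambda>t. (1 / \<psi> t) * (LINT s:{0..t}|lborel. rearr x s))"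

end

theory Submission
  imports Defs
begin

text \<open>Write \<open>f(t) = \<integral>\<^sub>0\<^sup>t x\<^sup>*\<close>, so that \<open>f \<le> C \<psi>\<close>, and \<open>F(z) = -\<integral>\<^sub>z\<^sup>\<infinity> \<lambda> dn\<^sub>x(\<lambda>) = f(n\<^sub>x(z))\<close>.
  Since \<open>f(n) \<ge> n/u\<close> for \<open>n < n\<^sub>x(1/u)\<close>, the bound \<open>f \<le> C \<psi>\<close> forces \<open>n\<^sub>x(1/u) \<le> s(u)\<close> for a
  scale \<open>s(u) \<asymp> u \<psi>(u)\<close>; the hypothesis \<open>\<psi>(t\<psi>(t)) \<sim> \<psi>(t)\<close> then gives
  \<open>F(1/u)/\<psi>(u) \<le> (1 + \<epsilon>) f(s(u))/\<psi>(s(u))\<close> for large \<open>u\<close>. Taking the scale smooth with \<open>s' \<ge> s/u\<close>,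
  the substitution \<open>v = s(u)\<close> in the logarithmic mean costs only \<open>ln (s(t)/t) = ln \<psi>(t) + O(1)\<close>,
  which is \<open>o(ln t)\<close> by the same hypothesis. Hence the logarithmic means of the two quotients differ by
  at most \<open>o(1)\<close>, and the generalised limit \<open>\<gamma>\<close> preserves the inequality.\<close>

lemma Psi_class_mono: "Psi_class \<psi> \<Longrightarrow> 0 \<le> a \<Longrightarrow> a \<le> b \<Longrightarrow> \<psi> a \<le> \<psi> b"
  unfolding Psi_class_def mono_on_def by auto

lemma Psi_class_filterlim_at_top: "Psi_class \<psi> \<Longrightarrow> filterlim \<psi> at_top at_top"
  unfolding Psi_class_def by auto

lemma Psi_class_eventually_ge: "Psi_class \<psi> \<Longrightarrow> eventually (\<lambda>t. c \<le> \<psi> t) at_top"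
  using Psi_class_filterlim_at_top by (simp add: filterlim_at_top)

lemma Psi_class_continuous_on:
  assumes "Psi_class \<psi>" shows "continuous_on {0<..} \<psi>"
proof -
  have "convex_on {0..} (\<lambda>x. - \<psi> x)" using assms unfolding Psi_class_def concave_on_def by auto
  then have "convex_on {0<..} (\<lambda>x. - \<psi> x)" by (rule convex_on_subset) auto
  then have "continuous_on {0<..} (\<lambda>x. - (- \<psi> x))"
    by (intro continuous_on_minus convex_on_continuous) auto
  then show ?thesis by simp
qed

lemma Psi_class_nonneg:
  assumes P: "Psi_class \<psi>" and t: "0 < t" shows "0 \<le> \<psi> t"
proof (rule ccontr)
  assume neg: "\<not> 0 \<le> \<psi> t"
  have "\<psi> \<in> O[at_right 0](\<lambda>t. t)" using P unfolding Psi_class_def by auto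
  then obtain c where c: "c > 0" "eventually (\<lambda>u. norm (\<psi> u) \<le> c * norm u) (at_right 0)"
    by (elim landau_o.bigE)
  have "eventually (\<lambda>u. u < min t (- \<psi> t / c)) (at_right (0::real))"
    using neg c(1) t by (intro order_tendstoD(2)[OF tendsto_ident_at]) (auto simp: field_simps)
  then have "eventually (\<lambda>u. norm (\<psi> u) \<le> c * norm u \<and> u < min t (- \<psi> t / c) \<and> 0 < u) (at_right 0)"
    using c(2) eventually_at_right_less by eventually_elim auto
  then obtain u where u: "norm (\<psi> u) \<le> c * norm u" "u < min t (- \<psi> t / c)" "0 < u"
    using eventually_happens trivial_limit_at_right_real by blast
  have "\<psi> u \<le> \<psi> t" using Psi_class_mono[OF P] u by auto
  moreover have "c * u < - \<psi> t" using u c(1) by (auto simp: field_simps)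
  ultimately show False using u(1,3) by auto
qed

text \<open>A concave function vanishing at two points of \<open>(0, \<infinity>)\<close> is \<open>\<le> 0\<close> beyond them, contradicting
  \<open>\<psi>(\<infinity>) = \<infinity>\<close>.\<close>
lemma Psi_class_pos:
  assumes P: "Psi_class \<psi>" and t: "0 < t" shows "0 < \<psi> t"
proof (rule ccontr)
  assume "\<not> 0 < \<psi> t"
  then have z: "\<psi> t = 0" using Psi_class_nonneg[OF P t] by auto
  have h0: "\<psi> (t/2) = 0"
    using Psi_class_nonneg[OF P, of "t/2"] Psi_class_mono[OF P, of "t/2" t] z t by auto
  have cc: "concave_on {0..} \<psi>" using P unfolding Psi_class_def by auto
  have le: "\<psi> v \<le> 0" if v: "v > t" for v
  proof -
    define \<theta> where "\<theta> = (t/2) / (v - t/2)"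
    have \<theta>: "0 \<le> \<theta>" "\<theta> \<le> 1" "0 < \<theta>" using v t by (auto simp: \<theta>_def field_simps)
    have "(1 - \<theta>) *\<^sub>R (t/2) + \<theta> *\<^sub>R v = t/2 + \<theta> * (v - t/2)" by (simp add: field_simps)
    also have "\<dots> = t" using v t by (simp add: \<theta>_def field_simps)
    finally have eq: "(1 - \<theta>) *\<^sub>R (t/2) + \<theta> *\<^sub>R v = t" .
    have "(1 - \<theta>) * \<psi> (t/2) + \<theta> * \<psi> v \<le> \<psi> ((1 - \<theta>) *\<^sub>R (t/2) + \<theta> *\<^sub>R v)"
      by (rule concave_onD[OF cc \<theta>(1,2)]) (use v t in auto)
    then have "\<theta> * \<psi> v \<le> 0" using eq z h0 by simp
    then show ?thesis using \<theta>(3) by (simp add: mult_le_0_iff)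
  qed
  have "eventually (\<lambda>v. 1 \<le> \<psi> v \<and> t < v) at_top"
    using Psi_class_eventually_ge[OF P] eventually_gt_at_top by (rule eventually_conj)
  then have "eventually (\<lambda>v::real. False) at_top" by eventually_elim (use le in force)
  then show False by simp
qed

lemma eventually_psi_tpsi_le:
  assumes P: "Psi_class \<psi>" and H: "((\<lambda>t. \<psi> (t * \<psi> t) / \<psi> t) \<longlongrightarrow> 1) at_top" and e: "0 < \<epsilon>"
  shows "eventually (\<lambda>t. \<psi> (t * \<psi> t) \<le> (1 + \<epsilon>) * \<psi> t) at_top"
proof -
  have "eventually (\<lambda>t. \<psi> (t * \<psi> t) / \<psi> t < 1 + \<epsilon>) at_top"
    using order_tendstoD(2)[OF H] e by simp
  then show ?thesis using eventually_gt_at_top[of 0]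
  proof eventually_elim
    case (elim t)
    with Psi_class_pos[OF P, of t] show ?case by (simp add: field_simps)
  qed
qed

lemma filterlim_times_Psi_class_at_top:
  assumes P: "Psi_class \<psi>" shows "filterlim (\<lambda>t. t * \<psi> t) at_top at_top"
proof (rule filterlim_at_top_mono[OF filterlim_ident])
  show "eventually (\<lambda>t. t \<le> t * \<psi> t) at_top"
    using Psi_class_eventually_ge[OF P, of 1] eventually_gt_at_top[of 0]
    by eventually_elim (simp add: mult_le_cancel_left1)
qed

text \<open>Apply the hypothesis twice, at \<open>t\<close> and at \<open>w = t \<psi>(t)\<close>, and use \<open>c w \<le> w \<psi>(w)\<close>.\<close>
lemma eventually_psi_scaled_tpsi_le:
  assumes P: "Psi_class \<psi>" and H: "((\<lambda>t. \<psi> (t * \<psi> t) / \<psi> t) \<longlongrightarrow> 1) at_top"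
    and e: "0 < \<epsilon>" and c: "0 < c"
  shows "eventually (\<lambda>t. \<psi> (c * (t * \<psi> t)) \<le> (1 + \<epsilon>) * \<psi> t) at_top"
proof -
  define \<epsilon>' where "\<epsilon>' = min 1 \<epsilon> / 3"
  have e': "0 < \<epsilon>'" "(1 + \<epsilon>') * (1 + \<epsilon>') \<le> 1 + \<epsilon>" using e by (auto simp: \<epsilon>'_def min_def field_simps)
  let ?Q = "\<lambda>w. \<psi> (w * \<psi> w) \<le> (1 + \<epsilon>') * \<psi> w \<and> c \<le> \<psi> w \<and> 0 < w"
  have "eventually ?Q at_top"
    using eventually_psi_tpsi_le[OF P H e'(1)] Psi_class_eventually_ge[OF P, of c] eventually_gt_at_top[of 0]
    by eventually_elim auto
  then have "eventually (\<lambda>t. ?Q (t * \<psi> t)) at_top"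
    using filterlim_times_Psi_class_at_top[OF P] by (rule eventually_compose_filterlim)
  then show ?thesis
    using eventually_psi_tpsi_le[OF P H e'(1)] eventually_gt_at_top[of 0]
  proof eventually_elim
    case (elim t)
    define w where "w = t * \<psi> t"
    have w: "?Q w" using elim(1) by (simp add: w_def)
    have "c * w \<le> w * \<psi> w" using w by (simp add: mult.commute mult_left_mono)
    then have "\<psi> (c * w) \<le> \<psi> (w * \<psi> w)" using Psi_class_mono[OF P] w c by auto
    also have "\<dots> \<le> (1 + \<epsilon>') * \<psi> w" using w by simp
    also have "\<dots> \<le> (1 + \<epsilon>') * ((1 + \<epsilon>') * \<psi> t)" using elim e' by (auto simp: w_def)
    also have "\<dots> \<le> (1 + \<epsilon>) * \<psi> t" using e' Psi_class_pos[OF P, of t] elim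
      by (metis mult.assoc mult_right_mono order_less_imp_le)
    finally show ?case by (simp add: w_def)
  qed
qed

lemma eventually_psi_double_le:
  assumes P: "Psi_class \<psi>" and H: "((\<lambda>t. \<psi> (t * \<psi> t) / \<psi> t) \<longlongrightarrow> 1) at_top"
  shows "eventually (\<lambda>t. \<psi> (2 * t) \<le> 2 * \<psi> t) at_top"
  using eventually_psi_tpsi_le[OF P H zero_less_one] Psi_class_eventually_ge[OF P, of 2]
    eventually_gt_at_top[of 0]
proof eventually_elim
  case (elim t)
  have "2 * t \<le> t * \<psi> t" using elim by (simp add: mult.commute mult_left_mono)
  then have "\<psi> (2 * t) \<le> \<psi> (t * \<psi> t)" using Psi_class_mono[OF P] elim by auto
  then show ?case using elim by simp
qed

text \<open>Along the orbit of \<open>t \<mapsto> t \<psi>(t)\<close>, \<open>ln t\<close> grows by at least \<open>M\<close> per step while \<open>ln \<psi>\<close>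
  grows by at most \<open>ln 2\<close>.\<close>
lemma orbit_times_psi_ln_bounds:
  assumes P: "Psi_class \<psi>" and M: "0 \<le> (M::real)"
    and T: "\<And>t. T \<le> t \<Longrightarrow> \<psi> (t * \<psi> t) \<le> 2 * \<psi> t \<and> exp M \<le> \<psi> t \<and> 1 \<le> t"
  defines "\<tau> k \<equiv> ((\<lambda>t. t * \<psi> t) ^^ k) T"
  shows "T \<le> \<tau> k \<and> ln T + k * M \<le> ln (\<tau> k) \<and> ln (\<psi> (\<tau> k)) \<le> ln (\<psi> T) + k * ln 2"
proof (induction k)
  case 0
  then show ?case by (simp add: \<tau>_def)
next
  case (Suc k)
  have \<tau>S: "\<tau> (Suc k) = \<tau> k * \<psi> (\<tau> k)" by (simp add: \<tau>_def)
  have Tk: "\<psi> (\<tau> k * \<psi> (\<tau> k)) \<le> 2 * \<psi> (\<tau> k)" "exp M \<le> \<psi> (\<tau> k)" "1 \<le> \<tau> k"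
    using T[of "\<tau> k"] Suc by auto
  have ge1: "1 \<le> \<psi> (\<tau> k)" using Tk(2) M by (meson one_le_exp_iff order_trans)
  have "\<tau> k \<le> \<tau> (Suc k)" unfolding \<tau>S using Tk(3) ge1 by (simp add: mult_le_cancel_left1)
  then have "T \<le> \<tau> (Suc k)" using Suc.IH by linarith
  moreover have "ln T + Suc k * M \<le> ln (\<tau> (Suc k))"
  proof -
    have "ln (\<tau> (Suc k)) = ln (\<tau> k) + ln (\<psi> (\<tau> k))"
      unfolding \<tau>S using Tk(3) ge1 by (simp add: ln_mult)
    moreover have "ln (exp M) \<le> ln (\<psi> (\<tau> k))" using Tk(2) by (intro ln_mono) auto
    ultimately show ?thesis using Suc.IH unfolding of_nat_Suc distrib_right ln_exp by (elim conjE) linarith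
  qed
  moreover have "ln (\<psi> (\<tau> (Suc k))) \<le> ln (\<psi> T) + Suc k * ln 2"
  proof -
    have "ln (\<psi> (\<tau> (Suc k))) \<le> ln (2 * \<psi> (\<tau> k))"
      using Tk(1,3) ge1 Psi_class_pos[OF P, of "\<tau> (Suc k)"] unfolding \<tau>S by (intro ln_mono) auto
    moreover have "ln (2 * \<psi> (\<tau> k)) = ln 2 + ln (\<psi> (\<tau> k))" using ge1 by (simp add: ln_mult)
    ultimately show ?thesis using Suc.IH unfolding of_nat_Suc distrib_right by (elim conjE) linarith
  qed
  ultimately show ?case by blast
qed

lemma seq_bracketE:
  fixes \<tau> :: "nat \<Rightarrow> 'a::linorder"
  assumes "\<tau> 0 \<le> t" "t < \<tau> n"
  obtains k where "\<tau> k \<le> t" "t < \<tau> (Suc k)"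
proof -
  have "\<exists>k. \<tau> k \<le> t \<and> t < \<tau> (Suc k)" using assms(2)
  proof (induction n)
    case 0
    then show ?case using assms(1) by simp
  next
    case (Suc n)
    then show ?case by (cases "t < \<tau> n") (auto simp: not_less)
  qed
  then show ?thesis using that by blast
qed

lemma eventually_ln_psi_le:
  assumes P: "Psi_class \<psi>" and H: "((\<lambda>t. \<psi> (t * \<psi> t) / \<psi> t) \<longlongrightarrow> 1) at_top" and e: "0 < \<epsilon>"
  shows "eventually (\<lambda>t. ln (\<psi> t) \<le> \<epsilon> * ln t) at_top"
proof -
  define M where "M = 2 * ln 2 / \<epsilon>"
  have M: "0 < M" using e by (simp add: M_def)
  have "eventually (\<lambda>t. \<psi> (t * \<psi> t) \<le> 2 * \<psi> t \<and> exp M \<le> \<psi> t \<and> 1 \<le> t) at_top"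
    using eventually_psi_tpsi_le[OF P H zero_less_one] Psi_class_eventually_ge[OF P, of "exp M"]
      eventually_ge_at_top[of 1]
    by eventually_elim auto
  then obtain T where T: "\<And>t. T \<le> t \<Longrightarrow> \<psi> (t * \<psi> t) \<le> 2 * \<psi> t \<and> exp M \<le> \<psi> t \<and> 1 \<le> t"
    by (auto simp: eventually_at_top_linorder)
  have T1: "1 \<le> T" using T[of T] by auto
  define \<tau> where "\<tau> k = ((\<lambda>t. t * \<psi> t) ^^ k) T" for k
  have orbit: "T \<le> \<tau> k \<and> ln T + k * M \<le> ln (\<tau> k) \<and> ln (\<psi> (\<tau> k)) \<le> ln (\<psi> T) + k * ln 2" for k
    unfolding \<tau>_def using M T by (intro orbit_times_psi_ln_bounds[OF P]) auto
  define c where "c = ln (\<psi> T) + ln 2"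
  have main: "ln (\<psi> t) \<le> c + (\<epsilon>/2) * ln t" if t: "T \<le> t" for t
  proof -
    obtain k0 :: nat where "ln t - ln T < k0 * M" using reals_Archimedean3[OF M] by blast
    then have "t < \<tau> k0" using orbit[of k0] T1 t by (smt (verit) ln_le_cancel_iff)
    moreover have "\<tau> 0 \<le> t" using t by (simp add: \<tau>_def)
    ultimately obtain k where tk: "\<tau> k \<le> t" "t < \<tau> (Suc k)" using seq_bracketE by metis
    have "ln (\<psi> t) \<le> ln (\<psi> (\<tau> (Suc k)))"
      using Psi_class_mono[OF P, of t "\<tau> (Suc k)"] tk t T1 Psi_class_pos[OF P, of t] by auto
    also have "\<dots> \<le> c + k * ln 2" using orbit[of "Suc k"] by (simp add: c_def algebra_simps)
    finally have A: "ln (\<psi> t) \<le> c + k * ln 2" .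
    have "ln T + k * M \<le> ln t" using orbit[of k] tk(1) T1 by (smt (verit) ln_le_cancel_iff)
    then have "k * M \<le> ln t" using T1 by (smt (verit) ln_ge_zero)
    then have "k * ln 2 \<le> (\<epsilon>/2) * ln t" using e unfolding M_def by (simp add: field_simps)
    then show ?thesis using A by linarith
  qed
  show ?thesis
    using eventually_ge_at_top[of T] eventually_ge_at_top[of "exp (2 * \<bar>c\<bar> / \<epsilon>)"]
  proof eventually_elim
    case (elim t)
    have "2 * \<bar>c\<bar> / \<epsilon> \<le> ln t" using elim(2) by (subst ln_ge_iff) (auto intro: less_le_trans[OF exp_gt_zero])
    then have "c \<le> (\<epsilon>/2) * ln t" using e by (simp add: field_simps)
    then show ?case using main[OF elim(1)] by linarith
  qed
qed

lemma bmeas_superlevel_sets: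
  assumes "bmeas x" shows "{s \<in> {0<..}. l < \<bar>x s\<bar>} \<in> sets lebesgue"
proof -
  have "(\<lambda>s. \<bar>indicator {0<..} s *\<^sub>R x s\<bar>) \<in> borel_measurable lebesgue"
    using assms unfolding bmeas_def set_borel_measurable_def by (auto intro: borel_measurable_abs)
  then have "{s \<in> space lebesgue. l < \<bar>indicator {0<..} s *\<^sub>R x s\<bar>} \<in> sets lebesgue"
    by (intro borel_measurable_less) auto
  moreover have "{0::real<..} \<in> sets lebesgue" by simp
  ultimately have "{0<..} \<inter> {s \<in> space lebesgue. l < \<bar>indicator {0<..} s *\<^sub>R x s\<bar>} \<in> sets lebesgue"
    by blast
  also have "{0<..} \<inter> {s \<in> space lebesgue. l < \<bar>indicator {0<..} s *\<^sub>R x s\<bar>} = {s \<in> {0<..}. l < \<bar>x s\<bar>}"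
    by (auto simp: indicator_def)
  finally show ?thesis .
qed

lemma bmeas_boundE:
  assumes "bmeas x" obtains B where "0 \<le> B" "\<And>s. 0 < s \<Longrightarrow> \<bar>x s\<bar> \<le> B"
proof -
  obtain B where "\<forall>y\<in>x ` {0<..}. norm y \<le> B"
    using assms unfolding bmeas_def by (auto simp: bounded_iff)
  then have "\<bar>x s\<bar> \<le> max B 0" if "0 < s" for s using that by force
  then show ?thesis using that[of "max B 0"] by simp
qed

lemma distfun_antimono:
  assumes "bmeas x" "l \<le> l'" shows "distfun x l' \<le> distfun x l"
  unfolding distfun_def using assms bmeas_superlevel_sets by (intro emeasure_mono) auto

lemma distfun_eq_0:
  assumes "\<And>s. 0 < s \<Longrightarrow> \<bar>x s\<bar> \<le> B" "B \<le> l" shows "distfun x l = 0"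
proof -
  have "{s \<in> {0<..}. l < \<bar>x s\<bar>} = {}" using assms by force
  then show ?thesis unfolding distfun_def by (metis emeasure_empty)
qed

lemma distfun_right_continuous_le:
  assumes "bmeas x" "\<And>l'. l < l' \<Longrightarrow> distfun x l' \<le> u" shows "distfun x l \<le> u"
proof -
  define A where "A k = {s \<in> {0<..}. l + 1 / Suc k < \<bar>x s\<bar>}" for k :: nat
  have sets: "range A \<subseteq> sets lebesgue" using bmeas_superlevel_sets[OF assms(1)] by (auto simp: A_def)
  have inc: "incseq A"
    unfolding A_def incseq_def by (auto intro: order.strict_trans1[rotated] simp: frac_le)
  have union: "(\<Union>k. A k) = {s \<in> {0<..}. l < \<bar>x s\<bar>}"
  proof (intro equalityI subsetI)
    fix s assume "s \<in> (\<Union>k. A k)"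
    then obtain k where "s \<in> A k" by blast
    moreover have "0 < 1 / real (Suc k)" by simp
    ultimately show "s \<in> {s \<in> {0<..}. l < \<bar>x s\<bar>}" unfolding A_def by (smt (verit) mem_Collect_eq)
  next
    fix s assume s: "s \<in> {s \<in> {0<..}. l < \<bar>x s\<bar>}"
    then obtain k :: nat where "1 / Suc k < \<bar>x s\<bar> - l" using nat_approx_posE[of "\<bar>x s\<bar> - l"] by auto
    then have "s \<in> A k" using s unfolding A_def by auto
    then show "s \<in> (\<Union>k. A k)" by blast
  qed
  have "distfun x l = (SUP k. emeasure lebesgue (A k))"
    unfolding distfun_def SUP_emeasure_incseq[OF sets inc] union ..
  also have "\<dots> \<le> u"
    using assms(2) unfolding distfun_def A_def by (intro SUP_least) simp
  finally show ?thesis .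
qed

lemma rearr_le_if_distfun_le:
  "0 \<le> l \<Longrightarrow> distfun x l \<le> ennreal t \<Longrightarrow> rearr x t \<le> l"
  unfolding rearr_def by (rule cInf_lower) (auto simp: bdd_below_def)

lemma rearr_set_nonempty:
  assumes "bmeas x" shows "{l. 0 \<le> l \<and> distfun x l \<le> ennreal t} \<noteq> {}"
proof -
  obtain B where "0 \<le> B" "\<And>s. 0 < s \<Longrightarrow> \<bar>x s\<bar> \<le> B" using bmeas_boundE[OF assms] by blast
  moreover from this have "distfun x B = 0" using distfun_eq_0[of x B B] by auto
  ultimately have "B \<in> {l. 0 \<le> l \<and> distfun x l \<le> ennreal t}" by simp
  then show ?thesis by blast
qed

lemma rearr_nonneg: "bmeas x \<Longrightarrow> 0 \<le> rearr x t"
  unfolding rearr_def by (rule cInf_greatest) (auto dest: rearr_set_nonempty)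

lemma rearr_boundE:
  assumes "bmeas x" obtains B where "\<And>t. rearr x t \<le> B"
proof -
  obtain B where "0 \<le> B" "\<And>s. 0 < s \<Longrightarrow> \<bar>x s\<bar> \<le> B" using bmeas_boundE[OF assms] by blast
  moreover from this have "distfun x B = 0" using distfun_eq_0[of x B B] by auto
  ultimately have "rearr x t \<le> B" for t by (intro rearr_le_if_distfun_le) auto
  then show ?thesis by (rule that)
qed

lemma rearr_antimono:
  assumes "bmeas x" "t \<le> t'" shows "rearr x t' \<le> rearr x t"
  unfolding rearr_def
proof (rule cInf_superset_mono)
  show "{l. 0 \<le> l \<and> distfun x l \<le> ennreal t} \<noteq> {}" by (rule rearr_set_nonempty[OF assms(1)])
  show "bdd_below {l. 0 \<le> l \<and> distfun x l \<le> ennreal t'}" by (auto simp: bdd_below_def)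
  show "{l. 0 \<le> l \<and> distfun x l \<le> ennreal t} \<subseteq> {l. 0 \<le> l \<and> distfun x l \<le> ennreal t'}"
    using assms(2) by (auto intro: order_trans ennreal_leI)
qed

lemma distfun_rearr_le:
  assumes bx: "bmeas x" shows "distfun x (rearr x t) \<le> ennreal t"
proof (rule distfun_right_continuous_le[OF bx])
  let ?S = "{l. 0 \<le> l \<and> distfun x l \<le> ennreal t}"
  fix l' assume "rearr x t < l'"
  moreover have "bdd_below ?S" by (auto simp: bdd_below_def)
  ultimately obtain l where l: "l \<in> ?S" "l < l'"
    unfolding rearr_def using cInf_less_iff[OF rearr_set_nonempty[OF bx]] by blast
  then have "distfun x l' \<le> distfun x l" by (intro distfun_antimono[OF bx]) auto
  also have "\<dots> \<le> ennreal t" using l by auto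
  finally show "distfun x l' \<le> ennreal t" .
qed

lemma rearr_gt_if_distfun_gt:
  assumes "bmeas x" "0 \<le> l" "ennreal t < distfun x l" shows "l < rearr x t"
proof (rule ccontr)
  assume "\<not> l < rearr x t"
  then have "distfun x l \<le> distfun x (rearr x t)" by (intro distfun_antimono[OF assms(1)]) auto
  also have "\<dots> \<le> ennreal t" by (rule distfun_rearr_le[OF assms(1)])
  finally show False using assms(3) by simp
qed

lemma borel_measurable_rearr: "bmeas x \<Longrightarrow> rearr x \<in> borel_measurable borel"
  using borel_measurable_mono[of "\<lambda>t. - rearr x t"] by (auto simp: mono_def rearr_antimono)

lemma set_integrable_rearr:
  assumes "bmeas x" "A \<in> sets lborel" "emeasure lborel A < \<infinity>"
  shows "set_integrable lborel A (rearr x)"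
proof -
  obtain B where "\<And>t. rearr x t \<le> B" using rearr_boundE[OF assms(1)] by blast
  then show ?thesis unfolding set_integrable_def
    using assms borel_measurable_rearr[OF assms(1)] rearr_nonneg[OF assms(1)]
    by (intro integrableI_bounded_set_indicator[where B=B]) auto
qed

definition rearr_integral :: "(real \<Rightarrow> real) \<Rightarrow> real \<Rightarrow> real" where
  "rearr_integral x t = (LINT s:{0..t}|lborel. rearr x s)"

lemma emeasure_lborel_Icc_less_top: "emeasure lborel {a..b::real} < top"
  by (cases "a \<le> b") auto

lemma set_integral_rearr_mono:
  assumes bx: "bmeas x" and A: "A \<in> sets lborel" "A \<subseteq> B"
    and B: "B \<in> sets lborel" "emeasure lborel B < \<infinity>"
  shows "(LINT v:A|lborel. rearr x v) \<le> (LINT v:B|lborel. rearr x v)"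
  unfolding set_lebesgue_integral_def
proof (rule integral_mono)
  have "emeasure lborel A < \<infinity>" using A B by (metis emeasure_mono le_less_trans)
  then show "integrable lborel (\<lambda>v. indicator A v *\<^sub>R rearr x v)"
    using set_integrable_rearr[OF bx A(1)] by (simp add: set_integrable_def)
  show "integrable lborel (\<lambda>v. indicator B v *\<^sub>R rearr x v)"
    using set_integrable_rearr[OF bx B] by (simp add: set_integrable_def)
  show "indicator A v *\<^sub>R rearr x v \<le> indicator B v *\<^sub>R rearr x v" for v
    using A(2) rearr_nonneg[OF bx] by (auto simp: indicator_def)
qed

lemma set_integral_rearr_nonneg: "bmeas x \<Longrightarrow> 0 \<le> (LINT v:A|lborel. rearr x v)"
  unfolding set_lebesgue_integral_def
  by (rule Bochner_Integration.integral_nonneg) (auto simp: indicator_def rearr_nonneg)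

lemma rearr_integral_nonneg: "bmeas x \<Longrightarrow> 0 \<le> rearr_integral x t"
  unfolding rearr_integral_def by (rule set_integral_rearr_nonneg)

lemma rearr_integral_mono: "bmeas x \<Longrightarrow> a \<le> b \<Longrightarrow> rearr_integral x a \<le> rearr_integral x b"
  unfolding rearr_integral_def by (rule set_integral_rearr_mono) (auto intro: emeasure_lborel_Icc_less_top)

lemma rearr_integral_ge:
  assumes bx: "bmeas x" and l: "0 \<le> l" and t: "0 \<le> t" and d: "ennreal t < distfun x l"
  shows "l * t \<le> rearr_integral x t"
proof -
  have "l * t = (LINT v:{0..t}|lborel. l)" using t by (subst set_integral_const) auto
  also have "\<dots> \<le> rearr_integral x t" unfolding rearr_integral_def
  proof (rule set_integral_mono)
    show "set_integrable lborel {0..t} (\<lambda>v. l)"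
      using emeasure_lborel_Icc_less_top by (simp add: set_integrable_def)
    show "set_integrable lborel {0..t} (rearr x)"
      by (rule set_integrable_rearr[OF bx]) (auto intro: emeasure_lborel_Icc_less_top)
    fix v assume "v \<in> {0..t}"
    then have "ennreal v < distfun x l" using d by (auto intro: le_less_trans ennreal_leI)
    then show "l \<le> rearr x v" using rearr_gt_if_distfun_gt[OF bx l] by (simp add: less_imp_le)
  qed
  finally show ?thesis .
qed

lemma emeasure_distr_abs_greaterThan:
  assumes bx: "bmeas x"
  shows "emeasure (distr (restrict_space lebesgue {0<..}) borel (\<lambda>s. \<bar>x s\<bar>)) {l<..} = distfun x l"
proof -
  have \<Omega>: "{0::real<..} \<inter> space lebesgue \<in> sets lebesgue" by simp
  have "(\<lambda>s. \<bar>indicator {0<..} s *\<^sub>R x s\<bar>) \<in> borel_measurable lebesgue"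
    using bx unfolding bmeas_def set_borel_measurable_def by (auto intro: borel_measurable_abs)
  moreover have "(\<lambda>s. \<bar>indicator {0<..} s *\<^sub>R x s\<bar>) = (\<lambda>s. indicator {0<..} s *\<^sub>R \<bar>x s\<bar>)"
    by (auto simp: indicator_def)
  ultimately have mx: "(\<lambda>s. \<bar>x s\<bar>) \<in> measurable (restrict_space lebesgue {0<..}) borel"
    by (subst borel_measurable_restrict_space_iff[OF \<Omega>]) simp
  have "emeasure (distr (restrict_space lebesgue {0<..}) borel (\<lambda>s. \<bar>x s\<bar>)) {l<..}
      = emeasure (restrict_space lebesgue {0<..}) ((\<lambda>s. \<bar>x s\<bar>) -` {l<..} \<inter> space (restrict_space lebesgue {0<..}))"
    by (rule emeasure_distr[OF mx]) simp
  also have "(\<lambda>s. \<bar>x s\<bar>) -` {l<..} \<inter> space (restrict_space lebesgue {0<..}) = {s \<in> {0<..}. l < \<bar>x s\<bar>}"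
    by (auto simp: space_restrict_space)
  also have "emeasure (restrict_space lebesgue {0<..}) \<dots> = distfun x l"
    unfolding distfun_def by (rule emeasure_restrict_space[OF \<Omega>]) auto
  finally show ?thesis .
qed

lemma emeasure_rearr_superlevel_Ico:
  assumes bx: "bmeas x" and z: "0 \<le> z" and N: "distfun x z = ennreal N" "0 \<le> N"
  shows "emeasure lborel ({0..<N} \<inter> rearr x -` {l<..}) = (if l < z then distfun x z else distfun x l)"
proof (cases "l < z")
  case True
  have "{0..<N} \<inter> rearr x -` {l<..} = {0..<N}"
  proof (intro equalityI subsetI)
    fix v assume v: "v \<in> {0..<N}"
    show "v \<in> {0..<N} \<inter> rearr x -` {l<..}"
    proof (cases "l < 0")
      case True
      then show ?thesis using v rearr_nonneg[OF bx, of v] by auto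
    next
      case False
      have "ennreal v < distfun x z" using v N by (auto simp: ennreal_less_iff)
      also have "\<dots> \<le> distfun x l" using distfun_antimono[OF bx] \<open>l < z\<close> by simp
      finally show ?thesis using rearr_gt_if_distfun_gt[OF bx] False v by auto
    qed
  qed auto
  then show ?thesis using True N by simp
next
  case False
  have "distfun x l \<le> distfun x z" using distfun_antimono[OF bx] False by simp
  then obtain L where L: "distfun x l = ennreal L" "0 \<le> L" "L \<le> N"
    using N by (cases "distfun x l") (auto simp: top_unique)
  have l0: "0 \<le> l" using False z by simp
  have "{0..<N} \<inter> rearr x -` {l<..} = {0..<L}"
  proof (intro equalityI subsetI)
    fix v assume v: "v \<in> {0..<N} \<inter> rearr x -` {l<..}"
    have "\<not> distfun x l \<le> ennreal v"
      using v rearr_le_if_distfun_le[OF l0, of x v] by auto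
    then show "v \<in> {0..<L}" using v L by (auto simp: ennreal_le_iff)
  next
    fix v assume v: "v \<in> {0..<L}"
    then have "ennreal v < distfun x l" using L by (auto simp: ennreal_less_iff)
    then have "l < rearr x v" by (rule rearr_gt_if_distfun_gt[OF bx l0])
    then show "v \<in> {0..<N} \<inter> rearr x -` {l<..}" using v L by auto
  qed
  then show ?thesis using False L by simp
qed

text \<open>Both sides integrate \<open>\<lambda>\<close> against a measure: the distribution of \<open>x\<^sup>*\<close> on \<open>[0, n\<^sub>x(z))\<close> and that
  of \<open>|x|\<close> on \<open>{|x| > z}\<close>. These agree on every half-line \<open>(l, \<infinity>)\<close>.\<close>
lemma stieltjes_tail_eq_set_integral_rearr:
  assumes bx: "bmeas x" and z: "0 \<le> z" and N: "distfun x z = ennreal N" "0 \<le> N"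
  shows "stieltjes_tail x z = (LINT v:{0..<N}|lborel. rearr x v)"
proof -
  define \<mu> where "\<mu> = distr (restrict_space lebesgue {0<..}) borel (\<lambda>s. \<bar>x s\<bar>)"
  have sets_\<mu>: "sets \<mu> = sets borel" by (simp add: \<mu>_def)
  define \<nu>\<^sub>x where "\<nu>\<^sub>x = density \<mu> (indicator {z<..})"
  define \<nu>\<^sub>r where "\<nu>\<^sub>r = distr (density lborel (indicator {0..<N})) borel (rearr x)"
  have "emeasure \<nu>\<^sub>r {l<..} = (if l < z then distfun x z else distfun x l)" for l
  proof -
    have "emeasure \<nu>\<^sub>r {l<..} = emeasure (density lborel (indicator {0..<N})) (rearr x -` {l<..})"
      unfolding \<nu>\<^sub>r_def by (subst emeasure_distr) (auto simp: borel_measurable_rearr[OF bx])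
    also have "\<dots> = emeasure lborel ({0..<N} \<inter> rearr x -` {l<..})"
      by (subst emeasure_restricted) (auto intro: measurable_sets_borel[OF borel_measurable_rearr[OF bx]])
    finally show ?thesis using emeasure_rearr_superlevel_Ico[OF bx z N] by simp
  qed
  moreover have "emeasure \<nu>\<^sub>x {l<..} = (if l < z then distfun x z else distfun x l)" for l
  proof -
    have "emeasure \<nu>\<^sub>x {l<..} = emeasure \<mu> ({z<..} \<inter> {l<..})"
      unfolding \<nu>\<^sub>x_def by (rule emeasure_restricted) (auto simp: sets_\<mu>)
    also have "{z<..} \<inter> {l<..} = (if l < z then {z<..} else {l<..})" by auto
    finally show ?thesis by (simp add: \<mu>_def emeasure_distr_abs_greaterThan[OF bx])
  qed
  moreover have "distfun x l < \<infinity>" if "z \<le> l" for l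
    using distfun_antimono[OF bx that] N by (simp add: le_less_trans)
  ultimately have "\<nu>\<^sub>r = \<nu>\<^sub>x"
    using N by (intro measure_eqI_lessThan) (auto simp: \<nu>\<^sub>r_def \<nu>\<^sub>x_def sets_\<mu>)
  have "stieltjes_tail x z = integral\<^sup>L \<mu> (\<lambda>l. indicator {z<..} l *\<^sub>R l)"
    unfolding stieltjes_tail_def set_lebesgue_integral_def \<mu>_def ..
  also have "\<dots> = integral\<^sup>L \<nu>\<^sub>x (\<lambda>l. l)"
    unfolding \<nu>\<^sub>x_def ennreal_indicator[symmetric]
    by (rule integral_density[symmetric]) (auto simp: sets_\<mu> measurable_cong_sets[OF sets_\<mu>])
  also have "\<dots> = integral\<^sup>L \<nu>\<^sub>r (\<lambda>l. l)" unfolding \<open>\<nu>\<^sub>r = \<nu>\<^sub>x\<close> ..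
  also have "\<dots> = integral\<^sup>L (density lborel (indicator {0..<N})) (rearr x)"
    unfolding \<nu>\<^sub>r_def by (rule integral_distr) (auto simp: borel_measurable_rearr[OF bx])
  also have "\<dots> = (LINT v:{0..<N}|lborel. rearr x v)"
    unfolding set_lebesgue_integral_def ennreal_indicator[symmetric]
    by (rule integral_density) (auto simp: borel_measurable_rearr[OF bx])
  finally show ?thesis .
qed

lemma distfun_finiteE:
  assumes "distfun x z < \<infinity>" obtains N where "distfun x z = ennreal N" "0 \<le> N"
  using assms by (cases "distfun x z") auto

lemma stieltjes_tail_nonneg:
  assumes bx: "bmeas x" and "0 \<le> z" "distfun x z < \<infinity>" shows "0 \<le> stieltjes_tail x z"
proof -
  obtain N where "distfun x z = ennreal N" "0 \<le> N" using distfun_finiteE assms(3) by blast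
  then show ?thesis
    using stieltjes_tail_eq_set_integral_rearr[OF bx assms(2)] set_integral_rearr_nonneg[OF bx] by simp
qed

lemma stieltjes_tail_le_rearr_integral:
  assumes bx: "bmeas x" and z: "0 \<le> z" and m: "0 \<le> m" and d: "distfun x z \<le> ennreal m"
  shows "stieltjes_tail x z \<le> rearr_integral x m"
proof -
  have "distfun x z < \<infinity>" using d by (simp add: le_less_trans)
  then obtain N where N: "distfun x z = ennreal N" "0 \<le> N" by (rule distfun_finiteE)
  then have "N \<le> m" using d m by simp
  then show ?thesis
    unfolding stieltjes_tail_eq_set_integral_rearr[OF bx z N] rearr_integral_def
    by (intro set_integral_rearr_mono[OF bx]) (auto intro: emeasure_lborel_Icc_less_top)
qed

lemma stieltjes_tail_antimono:
  assumes bx: "bmeas x" and z: "0 \<le> z" "z \<le> z'" and fin: "distfun x z < \<infinity>"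
  shows "stieltjes_tail x z' \<le> stieltjes_tail x z"
proof -
  obtain N where N: "distfun x z = ennreal N" "0 \<le> N" using distfun_finiteE fin by blast
  have "distfun x z' \<le> distfun x z" by (rule distfun_antimono[OF bx z(2)])
  moreover have "distfun x z' < \<infinity>" using calculation fin by (rule le_less_trans)
  then obtain N' where N': "distfun x z' = ennreal N'" "0 \<le> N'" by (rule distfun_finiteE)
  ultimately have "N' \<le> N" using N by simp
  have z': "0 \<le> z'" using z by simp
  show ?thesis
    unfolding stieltjes_tail_eq_set_integral_rearr[OF bx z(1) N] stieltjes_tail_eq_set_integral_rearr[OF bx z' N'(1,2)]
    using \<open>N' \<le> N\<close> N by (intro set_integral_rearr_mono[OF bx]) auto
qed

lemma bmeas_of_borel_bounded:
  assumes "f \<in> borel_measurable borel" "\<And>t. \<bar>f t\<bar> \<le> B" shows "bmeas f"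
  unfolding bmeas_def set_borel_measurable_def
proof
  have "(\<lambda>t. indicator {0<..} t *\<^sub>R f t) \<in> borel_measurable lborel"
    using assms(1) by (simp add: measurable_lborel1)
  then show "(\<lambda>t. indicator {0<..} t *\<^sub>R f t) \<in> borel_measurable lebesgue"
    by (rule measurable_completion)
  show "bounded (f ` {0<..})" unfolding bounded_iff using assms(2) by auto
qed

lemma bmeas_add: "bmeas a \<Longrightarrow> bmeas b \<Longrightarrow> bmeas (\<lambda>t. a t + b t)"
  unfolding bmeas_def set_borel_measurable_def
proof (elim conjE, intro conjI)
  assume "(\<lambda>t. indicator {0<..} t *\<^sub>R a t) \<in> borel_measurable lebesgue"
    "(\<lambda>t. indicator {0<..} t *\<^sub>R b t) \<in> borel_measurable lebesgue"
  then have "(\<lambda>t. indicator {0<..} t *\<^sub>R a t + indicator {0<..} t *\<^sub>R b t) \<in> borel_measurable lebesgue"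
    by measurable
  then show "(\<lambda>t. indicator {0<..} t *\<^sub>R (a t + b t)) \<in> borel_measurable lebesgue"
    by (simp add: algebra_simps)
  assume "bounded (a ` {0<..})" "bounded (b ` {0<..})"
  then show "bounded ((\<lambda>t. a t + b t) ` {0<..})"
    using bounded_plus_comp by blast
qed

lemma bmeas_cmult: "bmeas a \<Longrightarrow> bmeas (\<lambda>t. c * a t)"
  unfolding bmeas_def set_borel_measurable_def
proof (elim conjE, intro conjI)
  assume "(\<lambda>t. indicator {0<..} t *\<^sub>R a t) \<in> borel_measurable lebesgue"
  then have "(\<lambda>t. c * (indicator {0<..} t *\<^sub>R a t)) \<in> borel_measurable lebesgue" by measurable
  then show "(\<lambda>t. indicator {0<..} t *\<^sub>R (c * a t)) \<in> borel_measurable lebesgue"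
    by (simp add: algebra_simps)
  assume "bounded (a ` {0<..})"
  then obtain A where "\<forall>t\<in>{0<..}. \<bar>a t\<bar> \<le> A" by (auto simp: bounded_iff)
  then show "bounded ((\<lambda>t. c * a t) ` {0<..})" unfolding bounded_iff
    by (intro exI[of _ "\<bar>c\<bar> * A"]) (auto simp: abs_mult intro: mult_left_mono)
qed

lemma bmeas_max_0: "bmeas a \<Longrightarrow> bmeas (\<lambda>t. max 0 (a t))"
  unfolding bmeas_def set_borel_measurable_def
proof (elim conjE, intro conjI)
  assume "(\<lambda>t. indicator {0<..} t *\<^sub>R a t) \<in> borel_measurable lebesgue"
  then have "(\<lambda>t. max 0 (indicator {0<..} t *\<^sub>R a t)) \<in> borel_measurable lebesgue" by measurable
  moreover have "(\<lambda>t. max 0 (indicator {0<..} t *\<^sub>R a t)) = (\<lambda>t. indicator {0<..} t *\<^sub>R max 0 (a t))"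
    by (auto simp: indicator_def fun_eq_iff)
  ultimately show "(\<lambda>t. indicator {0<..} t *\<^sub>R max 0 (a t)) \<in> borel_measurable lebesgue" by simp
  assume "bounded (a ` {0<..})"
  then obtain A where "\<forall>t\<in>{0<..}. \<bar>a t\<bar> \<le> A" by (auto simp: bounded_iff)
  then show "bounded ((\<lambda>t. max 0 (a t)) ` {0<..})" unfolding bounded_iff
    by (intro exI[of _ A]) force
qed

text \<open>Positivity and linearity make \<open>\<gamma>\<close> monotone, and \<open>\<gamma>\<close> ignores \<open>max 0 (a - b)\<close>, which tends to \<open>0\<close>.\<close>
lemma generalised_limit_mono_eventually:
  assumes g: "generalised_limit \<gamma>" and a: "bmeas a" and b: "bmeas b"
    and ev: "\<And>\<eta>. 0 < \<eta> \<Longrightarrow> eventually (\<lambda>t. a t - b t \<le> \<eta>) at_top"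
  shows "\<gamma> a \<le> \<gamma> b"
proof -
  have add: "\<And>y z. bmeas y \<Longrightarrow> bmeas z \<Longrightarrow> \<gamma> (\<lambda>t. y t + z t) = \<gamma> y + \<gamma> z"
    and mult: "\<And>y c. bmeas y \<Longrightarrow> \<gamma> (\<lambda>t. c * y t) = c * \<gamma> y"
    and pos: "\<And>y. bmeas y \<Longrightarrow> (AE t in lebesgue. 0 < t \<longrightarrow> 0 \<le> y t) \<Longrightarrow> 0 \<le> \<gamma> y"
    and lim: "\<And>y. bmeas y \<Longrightarrow> (y \<longlongrightarrow> 0) at_top \<Longrightarrow> \<gamma> y = 0"
    using g unfolding generalised_limit_def by blast+
  define d where "d t = max 0 (a t + (-1) * b t)" for t
  have d: "bmeas d" unfolding d_def by (intro bmeas_max_0 bmeas_add bmeas_cmult a b)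
  have "(d \<longlongrightarrow> 0) at_top"
  proof (rule order_tendstoI)
    show "eventually (\<lambda>t. e < d t) at_top" if "e < 0" for e
      using that by (simp add: d_def less_max_iff_disj)
    show "eventually (\<lambda>t. d t < e) at_top" if "0 < e" for e
      using ev[of "e/2"] that by (auto simp: d_def elim!: eventually_mono)
  qed
  then have "\<gamma> d = 0" by (rule lim[OF d])
  have bd: "bmeas (\<lambda>t. b t + d t)" using b d by (rule bmeas_add)
  have ma: "bmeas (\<lambda>t. (-1) * a t)" using a by (rule bmeas_cmult)
  have "0 \<le> \<gamma> (\<lambda>t. (b t + d t) + (-1) * a t)"
    by (rule pos[OF bmeas_add[OF bd ma]]) (auto simp: d_def)
  also have "\<gamma> (\<lambda>t. (b t + d t) + (-1) * a t) = \<gamma> b + \<gamma> d - \<gamma> a"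
    using add[OF bd ma] add[OF b d] mult[OF a, of "-1"] by simp
  finally show ?thesis using \<open>\<gamma> d = 0\<close> by simp
qed

lemma nn_integral_const_div_Icc:
  assumes "0 < a" "a \<le> b" "0 \<le> c"
  shows "(\<integral>\<^sup>+x. ennreal (c / x) * indicator {a..b} x \<partial>lborel) = ennreal (c * (ln b - ln a))"
proof -
  have "(\<integral>\<^sup>+x. ennreal (c / x) * indicator {a..b} x \<partial>lborel) = ennreal (c * ln b - c * ln a)"
  proof (rule nn_integral_FTC_Icc)
    fix x assume x: "x \<in> {a..b}"
    then show "((\<lambda>x. c * ln x) has_real_derivative c / x) (at x)"
      using assms by (auto intro!: derivative_eq_intros)
    show "0 \<le> c / x" using assms x by auto
  qed (use assms in auto)
  then show ?thesis by (simp add: algebra_simps)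
qed

lemma set_integrable_div_Icc:
  fixes y :: "real \<Rightarrow> real"
  assumes "y \<in> borel_measurable borel" "\<And>s. a \<le> s \<Longrightarrow> \<bar>y s\<bar> \<le> B" "0 < a"
  shows "set_integrable lborel {a..b} (\<lambda>s. y s / s)"
  unfolding set_integrable_def
proof (rule integrableI_bounded_set_indicator[where B="B / a"])
  show "(\<lambda>s. y s / s) \<in> borel_measurable lborel" using assms(1) by (simp add: measurable_lborel1)
  show "emeasure lborel {a..b} < \<infinity>" using emeasure_lborel_Icc_less_top by simp
  show "AE s in lborel. s \<in> {a..b} \<longrightarrow> norm (y s / s) \<le> B / a"
  proof (rule AE_I2, clarify)
    fix s assume s: "s \<in> {a..b}"
    have "\<bar>y s\<bar> / s \<le> B / s" using s assms by (intro divide_right_mono) auto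
    also have "\<dots> \<le> B / a" using s assms order_trans[OF abs_ge_zero assms(2)[of s]]
      by (intro divide_left_mono) auto
    finally show "norm (y s / s) \<le> B / a" using s assms(3) by simp
  qed
qed simp

lemma nn_integral_div_Icc_eq_set_integral:
  assumes "h \<in> borel_measurable borel" "\<And>u. 0 \<le> h u" "\<And>u. h u \<le> C" "0 < a"
  shows "(\<integral>\<^sup>+u. ennreal (h u / u) * indicator {a..b} u \<partial>lborel) = ennreal (LINT u:{a..b}|lborel. h u / u)"
proof -
  have "integrable lborel (\<lambda>u. indicator {a..b} u *\<^sub>R (h u / u))"
    using set_integrable_div_Icc[of h a C b] assms by (simp add: set_integrable_def)
  then have "(\<integral>\<^sup>+u. ennreal (indicator {a..b} u *\<^sub>R (h u / u)) \<partial>lborel)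
      = ennreal (LINT u:{a..b}|lborel. h u / u)"
    unfolding set_lebesgue_integral_def
    by (rule nn_integral_eq_integral) (use assms in \<open>auto simp: indicator_def intro!: AE_I2\<close>)
  moreover have "ennreal (indicator {a..b} u *\<^sub>R (h u / u)) = ennreal (h u / u) * indicator {a..b} u" for u
    by (auto simp: indicator_def)
  ultimately show ?thesis by simp
qed

lemma borel_measurable_set_integral_Icc:
  fixes f :: "real \<Rightarrow> real"
  assumes "f \<in> borel_measurable borel"
  shows "(\<lambda>t. LINT s:{a..t}|lborel. f s) \<in> borel_measurable borel"
proof -
  have "(\<lambda>p::real \<times> real. indicator {a..fst p} (snd p) *\<^sub>R f (snd p)) \<in> borel_measurable (borel \<Otimes>\<^sub>M lborel)"
  proof -
    have "(\<lambda>p::real \<times> real. if a \<le> snd p \<and> snd p \<le> fst p then f (snd p) else 0) \<in> borel_measurable (borel \<Otimes>\<^sub>M lborel)"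
      using assms by measurable
    moreover have "(\<lambda>p::real \<times> real. indicator {a..fst p} (snd p) *\<^sub>R f (snd p))
        = (\<lambda>p. if a \<le> snd p \<and> snd p \<le> fst p then f (snd p) else 0)"
      by (auto simp: fun_eq_iff indicator_def)
    ultimately show ?thesis by simp
  qed
  then have "(\<lambda>t. integral\<^sup>L lborel (\<lambda>s. (\<lambda>p. indicator {a..fst p} (snd p) *\<^sub>R f (snd p)) (t, s))) \<in> borel_measurable borel"
    by (intro lborel.borel_measurable_lebesgue_integral) (simp add: case_prod_eta split_beta')
  then show ?thesis by (simp add: set_lebesgue_integral_def)
qed

lemma Mmean_cong: "(\<And>s. 1 \<le> s \<Longrightarrow> y s = y' s) \<Longrightarrow> Mmean y = Mmean y'"
  unfolding Mmean_def set_lebesgue_integral_def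
  by (intro ext if_cong arg_cong2[where f="(*)"] refl Bochner_Integration.integral_cong)
     (auto simp: indicator_def)

lemma Mmean_bounds:
  fixes y :: "real \<Rightarrow> real"
  assumes ym: "y \<in> borel_measurable borel" and yb: "\<And>s. 0 \<le> y s \<and> y s \<le> B"
  shows "0 \<le> Mmean y t \<and> Mmean y t \<le> B"
proof (cases "1 < t")
  case True
  have B: "0 \<le> B" using yb[of 0] by simp
  have "ennreal (LINT s:{1..t}|lborel. y s / s) = (\<integral>\<^sup>+s. ennreal (y s / s) * indicator {1..t} s \<partial>lborel)"
    using yb by (intro nn_integral_div_Icc_eq_set_integral[symmetric, OF ym]) auto
  also have "\<dots> \<le> (\<integral>\<^sup>+s. ennreal (B / s) * indicator {1..t} s \<partial>lborel)"
    using yb by (intro nn_integral_mono) (auto simp: indicator_def intro!: ennreal_leI divide_right_mono)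
  also have "\<dots> = ennreal (B * ln t)" using True B by (subst nn_integral_const_div_Icc) auto
  finally have "(LINT s:{1..t}|lborel. y s / s) \<le> B * ln t" using True B by (simp add: ennreal_le_iff)
  moreover have "0 \<le> (LINT s:{1..t}|lborel. y s / s)" unfolding set_lebesgue_integral_def
    using yb by (intro Bochner_Integration.integral_nonneg) (auto simp: indicator_def)
  ultimately show ?thesis using True by (simp add: Mmean_def divide_le_eq)
qed (use yb[of 0] in \<open>auto simp: Mmean_def\<close>)

lemma bmeas_Mmean:
  fixes y :: "real \<Rightarrow> real"
  assumes ym: "y \<in> borel_measurable borel" and yb: "\<And>s. 0 \<le> y s \<and> y s \<le> B"
  shows "bmeas (Mmean y)"
proof (rule bmeas_of_borel_bounded)
  have "(\<lambda>t. LINT s:{1..t}|lborel. y s / s) \<in> borel_measurable borel"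
    using ym by (intro borel_measurable_set_integral_Icc borel_measurable_divide) auto
  then show "Mmean y \<in> borel_measurable borel" unfolding Mmean_def by measurable
  show "\<bar>Mmean y t\<bar> \<le> B" for t using Mmean_bounds[OF assms, of t] by simp
qed

text \<open>Substitution \<open>v = s(u)\<close>: the condition \<open>s' \<ge> s/u\<close> says that \<open>s\<close> expands the measure \<open>du/u\<close>.\<close>
lemma nn_integral_div_substitution_le:
  fixes s s' Y :: "real \<Rightarrow> real"
  assumes ab: "0 < a" "a < b"
    and deriv: "\<And>x. x \<in> {a..b} \<Longrightarrow> (s has_real_derivative s' x) (at x)"
    and cont: "continuous_on {a..b} s'"
    and spos: "\<And>x. x \<in> {a..b} \<Longrightarrow> 0 < s x"
    and s'ge: "\<And>x. x \<in> {a..b} \<Longrightarrow> s x / x \<le> s' x"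
    and Y: "Y \<in> borel_measurable borel" "\<And>y. 0 \<le> Y y"
  shows "(\<integral>\<^sup>+x. ennreal (Y (s x) / x) * indicator {a..b} x \<partial>lborel)
       \<le> (\<integral>\<^sup>+y. ennreal (Y y / y) * indicator {s a..s b} y \<partial>lborel)"
proof -
  have s'0: "0 \<le> s' x" if "x \<in> {a..b}" for x
    using s'ge[OF that] spos[OF that] that ab by (smt (verit) divide_pos_pos atLeastAtMost_iff)
  have "(\<integral>\<^sup>+x. ennreal (Y (s x) / x) * indicator {a..b} x \<partial>lborel)
      \<le> (\<integral>\<^sup>+x. ennreal (Y (s x) / s x) * s' x * indicator {a..b} x \<partial>lborel)"
  proof (rule nn_integral_mono)
    fix x show "ennreal (Y (s x) / x) * indicator {a..b} x \<le> ennreal (Y (s x) / s x) * s' x * indicator {a..b} x"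
    proof (cases "x \<in> {a..b}")
      case True
      have sx: "0 < s x" by (rule spos[OF True])
      have "Y (s x) / x = (Y (s x) / s x) * (s x / x)" using sx by simp
      also have "\<dots> \<le> (Y (s x) / s x) * s' x"
        using s'ge[OF True] Y(2)[of "s x"] sx by (intro mult_left_mono) auto
      finally have "ennreal (Y (s x) / x) \<le> ennreal ((Y (s x) / s x) * s' x)" by (rule ennreal_leI)
      also have "\<dots> = ennreal (Y (s x) / s x) * s' x"
        using Y(2)[of "s x"] sx s'0[OF True] by (intro ennreal_mult) auto
      finally show ?thesis using True by simp
    qed simp
  qed
  also have "\<dots> = (\<integral>\<^sup>+y. ennreal (Y y / y) * indicator {s a..s b} y \<partial>lborel)"
    by (rule nn_integral_substitution_aux[where f = "\<lambda>y. ennreal (Y y / y)", symmetric])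
       (use ab deriv cont s'0 Y in auto)
  finally show ?thesis .
qed

lemma nn_integral_div_Icc_split_le:
  fixes Y :: "real \<Rightarrow> real"
  assumes T: "1 \<le> T" and Y: "Y \<in> borel_measurable borel" "\<And>u. 0 \<le> Y u \<and> Y u \<le> B"
  shows "(\<integral>\<^sup>+u. ennreal (Y u / u) * indicator {1..t} u \<partial>lborel)
      \<le> ennreal (B * ln T) + (\<integral>\<^sup>+u. ennreal (Y u / u) * indicator {T..t} u \<partial>lborel)"
proof -
  have "(\<integral>\<^sup>+u. ennreal (Y u / u) * indicator {1..t} u \<partial>lborel)
      \<le> (\<integral>\<^sup>+u. ennreal (B / u) * indicator {1..T} u + ennreal (Y u / u) * indicator {T..t} u \<partial>lborel)"
  proof (rule nn_integral_mono)
    fix u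
    have "ennreal (Y u / u) \<le> ennreal (B / u)" if "1 \<le> u"
      using Y(2)[of u] that by (intro ennreal_leI divide_right_mono) auto
    then show "ennreal (Y u / u) * indicator {1..t} u
        \<le> ennreal (B / u) * indicator {1..T} u + ennreal (Y u / u) * indicator {T..t} u"
      by (cases "u \<le> T") (auto simp: indicator_def intro: add_increasing2)
  qed
  also have "\<dots> = (\<integral>\<^sup>+u. ennreal (B / u) * indicator {1..T} u \<partial>lborel)
      + (\<integral>\<^sup>+u. ennreal (Y u / u) * indicator {T..t} u \<partial>lborel)"
    using Y(1) by (intro nn_integral_add) auto
  also have "(\<integral>\<^sup>+u. ennreal (B / u) * indicator {1..T} u \<partial>lborel) = ennreal (B * ln T)"
    using T Y(2)[of 0] by (subst nn_integral_const_div_Icc) auto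
  finally show ?thesis .
qed

lemma nn_integral_div_Icc_extend_le:
  fixes Y :: "real \<Rightarrow> real"
  assumes a: "1 \<le> a" and tb: "1 \<le> t" "t \<le> b"
    and Y: "Y \<in> borel_measurable borel" "\<And>u. 0 \<le> Y u \<and> Y u \<le> C"
  shows "(\<integral>\<^sup>+v. ennreal (Y v / v) * indicator {a..b} v \<partial>lborel)
      \<le> (\<integral>\<^sup>+v. ennreal (Y v / v) * indicator {1..t} v \<partial>lborel) + ennreal (C * (ln b - ln t))"
proof -
  have "(\<integral>\<^sup>+v. ennreal (Y v / v) * indicator {a..b} v \<partial>lborel)
      \<le> (\<integral>\<^sup>+v. ennreal (Y v / v) * indicator {1..t} v + ennreal (C / v) * indicator {t..b} v \<partial>lborel)"
  proof (rule nn_integral_mono)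
    fix v
    have "ennreal (Y v / v) \<le> ennreal (C / v)" if "1 \<le> v"
      using Y(2)[of v] that by (intro ennreal_leI divide_right_mono) auto
    then show "ennreal (Y v / v) * indicator {a..b} v
        \<le> ennreal (Y v / v) * indicator {1..t} v + ennreal (C / v) * indicator {t..b} v"
      using a by (cases "v \<le> t") (auto simp: indicator_def intro: add_increasing2)
  qed
  also have "\<dots> = (\<integral>\<^sup>+v. ennreal (Y v / v) * indicator {1..t} v \<partial>lborel)
      + (\<integral>\<^sup>+v. ennreal (C / v) * indicator {t..b} v \<partial>lborel)"
    using Y(1) by (intro nn_integral_add) auto
  also have "(\<integral>\<^sup>+v. ennreal (C / v) * indicator {t..b} v \<partial>lborel) = ennreal (C * (ln b - ln t))"
    using tb Y(2)[of 0] by (subst nn_integral_const_div_Icc) auto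
  finally show ?thesis .
qed

lemma log_integral_le_substituted:
  fixes Y1 Y2 s s' :: "real \<Rightarrow> real"
  assumes T: "1 \<le> T" "T < t"
    and Y1: "Y1 \<in> borel_measurable borel" "\<And>u. 0 \<le> Y1 u \<and> Y1 u \<le> B"
    and Y2: "Y2 \<in> borel_measurable borel" "\<And>u. 0 \<le> Y2 u \<and> Y2 u \<le> C"
    and e: "0 \<le> \<epsilon>"
    and le: "\<And>u. u \<in> {T..t} \<Longrightarrow> Y1 u \<le> (1 + \<epsilon>) * Y2 (s u)"
    and s_ge: "\<And>u. u \<in> {T..t} \<Longrightarrow> u \<le> s u"
    and deriv: "\<And>u. u \<in> {T..t} \<Longrightarrow> (s has_real_derivative s' u) (at u)"
    and cont: "continuous_on {T..t} s'"
    and s'_ge: "\<And>u. u \<in> {T..t} \<Longrightarrow> s u / u \<le> s' u"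
  shows "(LINT u:{1..t}|lborel. Y1 u / u)
     \<le> B * ln T + (1 + \<epsilon>) * (LINT u:{1..t}|lborel. Y2 u / u) + (1 + \<epsilon>) * C * (ln (s t) - ln t)"
proof -
  define Z where "Z v = (1 + \<epsilon>) * Y2 v" for v
  have Zm: "Z \<in> borel_measurable borel" using Y2(1) unfolding Z_def by measurable
  have Zb: "0 \<le> Z v \<and> Z v \<le> (1 + \<epsilon>) * C" for v
    using Y2(2)[of v] e unfolding Z_def by (auto intro: mult_left_mono)
  have sT: "T \<le> s T" and st: "t \<le> s t" using s_ge T by auto
  have "ennreal (LINT u:{1..t}|lborel. Y1 u / u) = (\<integral>\<^sup>+u. ennreal (Y1 u / u) * indicator {1..t} u \<partial>lborel)"
    using Y1 by (intro nn_integral_div_Icc_eq_set_integral[symmetric]) auto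
  also have "\<dots> \<le> ennreal (B * ln T) + (\<integral>\<^sup>+u. ennreal (Y1 u / u) * indicator {T..t} u \<partial>lborel)"
    using T(1) Y1 by (rule nn_integral_div_Icc_split_le)
  also have "(\<integral>\<^sup>+u. ennreal (Y1 u / u) * indicator {T..t} u \<partial>lborel)
      \<le> (\<integral>\<^sup>+u. ennreal (Z (s u) / u) * indicator {T..t} u \<partial>lborel)"
    using le T unfolding Z_def
    by (intro nn_integral_mono) (auto simp: indicator_def intro!: ennreal_leI divide_right_mono)
  also have "\<dots> \<le> (\<integral>\<^sup>+v. ennreal (Z v / v) * indicator {s T..s t} v \<partial>lborel)"
  proof (rule nn_integral_div_substitution_le[OF _ T(2) deriv cont _ s'_ge Zm])
    show "0 < s u" if "u \<in> {T..t}" for u using s_ge[OF that] that T by auto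
  qed (use T Zb in auto)
  also have "\<dots> \<le> (\<integral>\<^sup>+v. ennreal (Z v / v) * indicator {1..t} v \<partial>lborel)
      + ennreal ((1 + \<epsilon>) * C * (ln (s t) - ln t))"
    using sT st T by (intro nn_integral_div_Icc_extend_le[OF _ _ _ Zm Zb]) auto
  also have "(\<integral>\<^sup>+v. ennreal (Z v / v) * indicator {1..t} v \<partial>lborel) = ennreal (LINT v:{1..t}|lborel. Z v / v)"
    using Zb by (intro nn_integral_div_Icc_eq_set_integral[OF Zm]) auto
  finally have "ennreal (LINT u:{1..t}|lborel. Y1 u / u)
      \<le> ennreal (B * ln T) + (ennreal (LINT v:{1..t}|lborel. Z v / v) + ennreal ((1 + \<epsilon>) * C * (ln (s t) - ln t)))"
    by (simp add: add_mono)
  moreover have "0 \<le> (LINT v:{1..t}|lborel. Z v / v)" unfolding set_lebesgue_integral_def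
    using Zb by (intro Bochner_Integration.integral_nonneg) (auto simp: indicator_def)
  moreover have "0 \<le> (1 + \<epsilon>) * C * (ln (s t) - ln t)" "0 \<le> B * ln T"
    using e Y2(2)[of 0] Y1(2)[of 0] st T by auto
  moreover have "(LINT v:{1..t}|lborel. Z v / v) = (1 + \<epsilon>) * (LINT v:{1..t}|lborel. Y2 v / v)"
    unfolding Z_def times_divide_eq_right[symmetric] by (rule set_integral_mult_right)
  ultimately show ?thesis by (simp add: ennreal_plus[symmetric] del: ennreal_plus)
qed

lemma Mmean_diff_le:
  fixes Y1 Y2 s s' :: "real \<Rightarrow> real"
  assumes Y1: "Y1 \<in> borel_measurable borel" "\<And>u. 0 \<le> Y1 u \<and> Y1 u \<le> B"
    and Y2: "Y2 \<in> borel_measurable borel" "\<And>u. 0 \<le> Y2 u \<and> Y2 u \<le> C"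
    and deriv: "\<And>u. 1 \<le> u \<Longrightarrow> (s has_real_derivative s' u) (at u)"
    and cont: "\<And>a b. 1 \<le> a \<Longrightarrow> continuous_on {a..b} s'"
    and s'_ge: "\<And>u. 1 \<le> u \<Longrightarrow> s u / u \<le> s' u"
    and T: "1 \<le> T" "T < t" and \<epsilon>: "0 \<le> \<epsilon>"
    and le: "\<And>u. T \<le> u \<Longrightarrow> Y1 u \<le> (1 + \<epsilon>) * Y2 (s u) \<and> u \<le> s u"
  shows "(Mmean Y1 t - Mmean Y2 t) * ln t \<le> B * ln T + \<epsilon> * C * ln t + (1 + \<epsilon>) * C * (ln (s t) - ln t)"
proof -
  have t1: "1 < t" and ln_t: "0 < ln t" using T by auto
  define I1 where "I1 = (LINT u:{1..t}|lborel. Y1 u / u)"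
  define I2 where "I2 = (LINT u:{1..t}|lborel. Y2 u / u)"
  have "I1 \<le> B * ln T + (1 + \<epsilon>) * I2 + (1 + \<epsilon>) * C * (ln (s t) - ln t)"
    unfolding I1_def I2_def using T \<epsilon> le deriv cont s'_ge
    by (intro log_integral_le_substituted[where s' = s', OF _ _ Y1 Y2]) auto
  then have "I1 - I2 \<le> B * ln T + \<epsilon> * I2 + (1 + \<epsilon>) * C * (ln (s t) - ln t)"
    by (simp add: algebra_simps)
  moreover have "0 \<le> Mmean Y2 t \<and> Mmean Y2 t \<le> C" by (rule Mmean_bounds[OF Y2])
  then have "\<epsilon> * I2 \<le> \<epsilon> * C * ln t"
    using t1 ln_t \<epsilon> mult_left_mono[of I2 "C * ln t" \<epsilon>]
    by (auto simp: Mmean_def I2_def field_simps)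
  moreover have "(Mmean Y1 t - Mmean Y2 t) * ln t = I1 - I2"
    using t1 ln_t by (simp add: Mmean_def I1_def I2_def diff_divide_distrib[symmetric])
  ultimately show ?thesis by linarith
qed

text \<open>The logarithmic mean forgets the initial interval \<open>[1, T]\<close>, and the substitution \<open>v = s(u)\<close> costs
  only \<open>ln (s t / t) = o(ln t)\<close>.\<close>
lemma Mmean_diff_eventually_le:
  fixes Y1 Y2 s s' :: "real \<Rightarrow> real"
  assumes Y1: "Y1 \<in> borel_measurable borel" "\<And>u. 0 \<le> Y1 u \<and> Y1 u \<le> B"
    and Y2: "Y2 \<in> borel_measurable borel" "\<And>u. 0 \<le> Y2 u \<and> Y2 u \<le> C"
    and deriv: "\<And>u. 1 \<le> u \<Longrightarrow> (s has_real_derivative s' u) (at u)"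
    and cont: "\<And>a b. 1 \<le> a \<Longrightarrow> continuous_on {a..b} s'"
    and s'_ge: "\<And>u. 1 \<le> u \<Longrightarrow> s u / u \<le> s' u"
    and le: "\<And>\<epsilon>. 0 < \<epsilon> \<Longrightarrow> eventually (\<lambda>u. Y1 u \<le> (1 + \<epsilon>) * Y2 (s u) \<and> u \<le> s u) at_top"
    and slow: "\<And>\<delta>. 0 < \<delta> \<Longrightarrow> eventually (\<lambda>t. ln (s t) - ln t \<le> \<delta> * ln t) at_top"
    and \<eta>: "0 < \<eta>"
  shows "eventually (\<lambda>t. Mmean Y1 t - Mmean Y2 t \<le> \<eta>) at_top"
proof -
  have C: "0 \<le> C" using Y2(2)[of 0] by simp
  define \<epsilon> where "\<epsilon> = min 1 (\<eta> / (4 * (C + 1)))"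
  have \<epsilon>: "0 < \<epsilon>" "\<epsilon> \<le> 1" "\<epsilon> * C \<le> \<eta> / 4"
  proof -
    have "\<epsilon> * C \<le> \<eta> / (4 * (C + 1)) * (C + 1)" using C \<eta> by (intro mult_mono) (auto simp: \<epsilon>_def)
    also have "\<dots> = \<eta> / 4" using C by (simp add: field_simps)
    finally show "\<epsilon> * C \<le> \<eta> / 4" .
  qed (use \<eta> C in \<open>auto simp: \<epsilon>_def\<close>)
  define \<delta> where "\<delta> = \<eta> / (8 * (C + 1))"
  have \<delta>: "0 < \<delta>" "2 * C * \<delta> \<le> \<eta> / 4"
    using \<eta> C by (auto simp: \<delta>_def field_simps)
  obtain T where T: "\<And>u. T \<le> u \<Longrightarrow> Y1 u \<le> (1 + \<epsilon>) * Y2 (s u) \<and> u \<le> s u" and T1: "1 \<le> T"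
    using eventually_conj[OF le[OF \<epsilon>(1)] eventually_ge_at_top[of 1]]
    by (auto simp: eventually_at_top_linorder)
  have "eventually (\<lambda>t. B * ln T \<le> (\<eta> / 2) * ln t) at_top"
    using ln_at_top \<eta> unfolding filterlim_at_top
    by (auto elim!: eventually_mono[OF spec[of _ "B * ln T / (\<eta> / 2)"]] simp: field_simps)
  then show ?thesis
    using slow[OF \<delta>(1)] eventually_gt_at_top[of T]
  proof eventually_elim
    case (elim t)
    have ln_t: "0 < ln t" using elim T1 by auto
    have "0 \<le> ln (s t) - ln t" using T[of t] elim(3) T1 by auto
    then have "(1 + \<epsilon>) * C * (ln (s t) - ln t) \<le> 2 * C * (\<delta> * ln t)"
      using elim(2) \<epsilon>(2) C by (intro mult_mono) auto
    then have "(Mmean Y1 t - Mmean Y2 t) * ln t \<le> (\<eta> / 2) * ln t + (\<epsilon> * C) * ln t + (2 * C * \<delta>) * ln t"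
      using Mmean_diff_le[OF Y1 Y2 deriv cont s'_ge T1 elim(3) _ T] \<epsilon>(1) elim(1) by (simp add: algebra_simps)
    also have "\<dots> \<le> (\<eta> / 2) * ln t + (\<eta> / 4) * ln t + (\<eta> / 4) * ln t"
      using \<epsilon>(3) \<delta>(2) ln_t by (intro add_mono mult_right_mono) auto
    finally show ?case using ln_t by simp
  qed
qed

text \<open>A concave \<open>\<psi>\<close> need not be differentiable; this average of \<open>\<psi>(v)/v\<close> is, and it stays between
  \<open>\<psi>(u)/2\<close> and \<open>\<psi>(2u)\<close>.\<close>
definition psi_smooth :: "(real \<Rightarrow> real) \<Rightarrow> real \<Rightarrow> real" where
  "psi_smooth \<psi> u = integral {u..2 * u} (\<lambda>v. \<psi> v / v)"

lemma continuous_on_psi_div: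
  assumes P: "Psi_class \<psi>" and a: "0 < a" shows "continuous_on {a..b} (\<lambda>v. \<psi> v / v)"
proof -
  have "continuous_on {a..b} \<psi>" by (rule continuous_on_subset[OF Psi_class_continuous_on[OF P]]) (use a in auto)
  then show ?thesis using a by (intro continuous_intros) auto
qed

lemma has_real_derivative_psi_smooth:
  assumes P: "Psi_class \<psi>" and u: "1 \<le> u"
  shows "(psi_smooth \<psi> has_real_derivative (\<psi> (2 * u) - \<psi> u) / u) (at u)"
proof -
  define G where "G v = integral {1/2..v} (\<lambda>v. \<psi> v / v)" for v
  have G: "(G has_real_derivative \<psi> v / v) (at v)" if "1/2 < v" for v
  proof -
    have "(G has_real_derivative \<psi> v / v) (at v within {1/2..v+1})"
      unfolding G_def using that by (intro integral_has_real_derivative continuous_on_psi_div[OF P]) auto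
    moreover have "at v within {1/2..v+1} = at v"
      using that by (intro at_within_interior) (simp add: interior_atLeastAtMost_real)
    ultimately show ?thesis by simp
  qed
  have eq: "G (2 * v) - G v = psi_smooth \<psi> v" if "1/2 < v" for v
  proof -
    have "(\<lambda>v. \<psi> v / v) integrable_on {1/2..2 * v}"
      by (intro integrable_continuous_real continuous_on_psi_div[OF P]) auto
    then have "G v + psi_smooth \<psi> v = G (2 * v)"
      unfolding G_def psi_smooth_def using that by (intro Henstock_Kurzweil_Integration.integral_combine) auto
    then show ?thesis by simp
  qed
  have "((\<lambda>v. G (2 * v)) has_real_derivative (\<psi> (2 * u) / (2 * u)) * 2) (at u)"
    by (rule DERIV_chain2[OF G]) (use u in \<open>auto intro!: derivative_eq_intros\<close>)
  from DERIV_diff[OF this G[of u]]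
  have "((\<lambda>v. G (2 * v) - G v) has_real_derivative (\<psi> (2 * u) - \<psi> u) / u) (at u)"
    using u by (simp add: field_simps)
  then show ?thesis
    by (rule has_field_derivative_transform_within_open[of _ _ _ "{1/2<..}"]) (use u eq in auto)
qed

lemma psi_smooth_bounds:
  assumes P: "Psi_class \<psi>" and u: "0 < u"
  shows "\<psi> u / 2 \<le> psi_smooth \<psi> u \<and> psi_smooth \<psi> u \<le> \<psi> (2 * u)"
proof -
  have int: "(\<lambda>v. \<psi> v / v) integrable_on {u..2 * u}"
    by (intro integrable_continuous_real continuous_on_psi_div[OF P u])
  have "\<psi> u / 2 = integral {u..2 * u} (\<lambda>v. \<psi> u / (2 * u))" using u by (simp add: content_real)
  also have "\<dots> \<le> psi_smooth \<psi> u" unfolding psi_smooth_def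
  proof (rule integral_le[OF integrable_const_ivl int])
    fix v assume v: "v \<in> {u..2 * u}"
    then have "\<psi> u \<le> \<psi> v" "0 \<le> \<psi> u" using Psi_class_mono[OF P] Psi_class_pos[OF P u] u by auto
    then show "\<psi> u / (2 * u) \<le> \<psi> v / v"
      using v u by (intro frac_le) auto
  qed
  finally have lo: "\<psi> u / 2 \<le> psi_smooth \<psi> u" .
  have "psi_smooth \<psi> u \<le> integral {u..2 * u} (\<lambda>v. \<psi> (2 * u) / u)" unfolding psi_smooth_def
  proof (rule integral_le[OF int integrable_const_ivl])
    fix v assume v: "v \<in> {u..2 * u}"
    then have "\<psi> v \<le> \<psi> (2 * u)" "0 \<le> \<psi> v" using Psi_class_mono[OF P] Psi_class_pos[OF P, of v] u by auto
    then show "\<psi> v / v \<le> \<psi> (2 * u) / u"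
      using v u by (intro frac_le) auto
  qed
  also have "\<dots> = \<psi> (2 * u)" using u by (simp add: content_real)
  finally show ?thesis using lo by simp
qed

lemma psi_scale_derivative:
  assumes P: "Psi_class \<psi>" and K: "0 \<le> K"
  defines "s \<equiv> \<lambda>u. K * u * psi_smooth \<psi> u" and "s' \<equiv> \<lambda>u. K * (psi_smooth \<psi> u + (\<psi> (2 * u) - \<psi> u))"
  shows has_real_derivative_psi_scale: "\<And>u. 1 \<le> u \<Longrightarrow> (s has_real_derivative s' u) (at u)"
    and continuous_on_psi_scale_derivative: "\<And>a b. 1 \<le> a \<Longrightarrow> continuous_on {a..b} s'"
    and psi_scale_derivative_ge: "\<And>u. 1 \<le> u \<Longrightarrow> s u / u \<le> s' u"
proof -
  fix u :: real assume u: "1 \<le> u"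
  have "((\<lambda>u. K * u * psi_smooth \<psi> u) has_real_derivative
      K * psi_smooth \<psi> u + (\<psi> (2 * u) - \<psi> u) / u * (K * u)) (at u)"
    by (intro DERIV_mult has_real_derivative_psi_smooth[OF P u] derivative_eq_intros) auto
  moreover have "K * psi_smooth \<psi> u + (\<psi> (2 * u) - \<psi> u) / u * (K * u) = s' u"
    using u by (simp add: s'_def field_simps)
  ultimately show "(s has_real_derivative s' u) (at u)" by (simp add: s_def)
  have "\<psi> u \<le> \<psi> (2 * u)" using Psi_class_mono[OF P, of u "2 * u"] u by auto
  then show "s u / u \<le> s' u" using u K by (simp add: s_def s'_def mult_left_mono)
next
  fix a b :: real assume a: "1 \<le> a"
  have "isCont (psi_smooth \<psi>) u" if "u \<in> {a..b}" for u
    using that a by (intro DERIV_isCont[OF has_real_derivative_psi_smooth[OF P]]) auto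
  then have "continuous_on {a..b} (psi_smooth \<psi>)" by (intro continuous_at_imp_continuous_on) auto
  moreover have "continuous_on {a..b} \<psi>" "continuous_on ((*) 2 ` {a..b}) \<psi>"
    using a by (auto intro: continuous_on_subset[OF Psi_class_continuous_on[OF P]])
  ultimately show "continuous_on {a..b} s'" unfolding s'_def
    by (intro continuous_intros continuous_on_compose2[of "(*) 2 ` {a..b}" \<psi> "{a..b}" "(*) 2"]) auto
qed

lemma M_psi_rearr_integral_le:
  assumes P: "Psi_class \<psi>" and M: "M_psi \<psi> x"
  obtains C where "1 \<le> C" "\<And>t. 0 < t \<Longrightarrow> rearr_integral x t \<le> C * \<psi> t"
proof -
  obtain C where C: "\<And>t. 0 < t \<Longrightarrow> (1 / \<psi> t) * rearr_integral x t \<le> C"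
    using M unfolding M_psi_def rearr_integral_def bdd_above_def by auto
  have "rearr_integral x t \<le> max C 1 * \<psi> t" if t: "0 < t" for t
  proof -
    have "rearr_integral x t \<le> C * \<psi> t" using C[OF t] Psi_class_pos[OF P t] by (simp add: field_simps)
    also have "\<dots> \<le> max C 1 * \<psi> t" using Psi_class_pos[OF P t] by (intro mult_right_mono) auto
    finally show ?thesis .
  qed
  then show ?thesis using that[of "max C 1"] by simp
qed

lemma distfun_le_if_rearr_integral_less:
  assumes "bmeas x" "0 \<le> l" "0 \<le> t" "rearr_integral x t < l * t"
  shows "distfun x l \<le> ennreal t"
  using rearr_integral_ge[OF assms(1-3)] assms(4) by (meson linorder_not_le)

text \<open>If \<open>n_x(l) = \<infinity>\<close> then \<open>\<integral>\<^sub>0\<^sup>t x\<^sup>* \<ge> l t\<close> for all \<open>t\<close>, which is incompatible with \<open>\<psi>(t) = o(t)\<close>.\<close>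
lemma M_psi_distfun_finite:
  assumes P: "Psi_class \<psi>" and M: "M_psi \<psi> x" and l: "0 < l"
  shows "distfun x l < \<infinity>"
proof (rule ccontr)
  assume "\<not> distfun x l < \<infinity>"
  then have inf: "distfun x l = \<infinity>" by (metis less_top infinity_ennreal_def)
  have bx: "bmeas x" using M by (simp add: M_psi_def)
  obtain C where C: "1 \<le> C" "\<And>t. 0 < t \<Longrightarrow> rearr_integral x t \<le> C * \<psi> t"
    using M_psi_rearr_integral_le[OF P M] by blast
  have "\<psi> \<in> o[at_top](\<lambda>t. t)" using P by (simp add: Psi_class_def)
  then have "eventually (\<lambda>t::real. norm (\<psi> t) \<le> l / (2 * C) * norm t) at_top"
    using l C(1) by (intro landau_o.smallD) auto
  moreover have "eventually (\<lambda>t::real. 0 < t) at_top" by (rule eventually_gt_at_top)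
  ultimately obtain t where t: "norm (\<psi> t) \<le> l / (2 * C) * norm t" "0 < t"
    using eventually_happens'[OF trivial_limit_at_top_linorder] by (metis (lifting) eventually_conj)
  have "l * t \<le> rearr_integral x t"
    using t inf l by (intro rearr_integral_ge[OF bx]) auto
  also have "\<dots> \<le> C * \<psi> t" by (rule C(2)[OF t(2)])
  also have "\<dots> \<le> C * (l / (2 * C) * t)" using t C(1) by (intro mult_left_mono) auto
  also have "\<dots> = l * t / 2" using C(1) by simp
  finally show False using l t(2) by simp
qed

text \<open>The quotient \<open>g(t)/\<psi>(t)\<close>, frozen on \<open>[0, 1]\<close> so that it becomes bounded and Borel measurable on
  the whole line; the logarithmic mean only sees \<open>t \<ge> 1\<close>.\<close>
definition psi_quotient :: "(real \<Rightarrow> real) \<Rightarrow> (real \<Rightarrow> real) \<Rightarrow> real \<Rightarrow> real" where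
  "psi_quotient \<psi> g t = g (max t 1) / \<psi> (max t 1)"

lemma psi_quotient_eq: "1 \<le> t \<Longrightarrow> psi_quotient \<psi> g t = g t / \<psi> t"
  by (simp add: psi_quotient_def max_def)

lemma Mmean_psi_quotient: "Mmean (\<lambda>t. (1 / \<psi> t) * g t) = Mmean (psi_quotient \<psi> g)"
  by (rule Mmean_cong) (simp add: psi_quotient_eq)

lemma borel_measurable_psi_quotient:
  assumes P: "Psi_class \<psi>" and g: "\<And>a b. 1 \<le> a \<Longrightarrow> a \<le> b \<Longrightarrow> g a \<le> g b"
  shows "psi_quotient \<psi> g \<in> borel_measurable borel"
proof -
  have "mono (\<lambda>t. - (1 / \<psi> (max t 1)))"
    using Psi_class_mono[OF P] Psi_class_pos[OF P] by (auto intro!: monoI frac_le)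
  moreover have "mono (\<lambda>t. g (max t 1))" using g by (auto intro!: monoI)
  ultimately have "(\<lambda>t. - (- (1 / \<psi> (max t 1))) * g (max t 1)) \<in> borel_measurable borel"
    by (intro borel_measurable_times borel_measurable_uminus borel_measurable_mono)
  then show ?thesis by (simp add: psi_quotient_def[abs_def])
qed

lemma psi_quotient_rearr_integral_bounds:
  assumes P: "Psi_class \<psi>" and bx: "bmeas x" and C: "\<And>t. 0 < t \<Longrightarrow> rearr_integral x t \<le> C * \<psi> t"
  shows "0 \<le> psi_quotient \<psi> (rearr_integral x) t \<and> psi_quotient \<psi> (rearr_integral x) t \<le> C"
proof -
  have "0 < \<psi> (max t 1)" by (rule Psi_class_pos[OF P]) simp
  then show ?thesis using C[of "max t 1"] rearr_integral_nonneg[OF bx]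
    by (simp add: psi_quotient_def divide_le_eq)
qed

lemma psi_quotient_tail_bounded:
  assumes P: "Psi_class \<psi>" and bx: "bmeas x" and fin: "\<And>l. 0 < l \<Longrightarrow> distfun x l < \<infinity>"
    and ev: "eventually (\<lambda>u. stieltjes_tail x (1/u) / \<psi> u \<le> B) at_top"
  obtains B' where "\<And>t. 0 \<le> psi_quotient \<psi> (\<lambda>u. stieltjes_tail x (1/u)) t
    \<and> psi_quotient \<psi> (\<lambda>u. stieltjes_tail x (1/u)) t \<le> B'"
proof -
  obtain T where T: "\<And>u. T \<le> u \<Longrightarrow> stieltjes_tail x (1/u) / \<psi> u \<le> B" "1 \<le> T"
    using eventually_conj[OF ev eventually_ge_at_top[of 1]] by (auto simp: eventually_at_top_linorder)
  define B' where "B' = max B (stieltjes_tail x (1/T) / \<psi> 1)"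
  have "0 \<le> stieltjes_tail x (1/u) / \<psi> u \<and> stieltjes_tail x (1/u) / \<psi> u \<le> B'" if u: "1 \<le> u" for u
  proof -
    have pos: "0 < \<psi> 1" "0 < \<psi> u" using Psi_class_pos[OF P] u by auto
    have nonneg: "0 \<le> stieltjes_tail x (1/u)" using u fin by (intro stieltjes_tail_nonneg[OF bx]) auto
    have "stieltjes_tail x (1/u) / \<psi> u \<le> stieltjes_tail x (1/T) / \<psi> 1" if "u < T"
    proof (rule frac_le)
      show "stieltjes_tail x (1/u) \<le> stieltjes_tail x (1/T)"
        using that u T(2) fin by (intro stieltjes_tail_antimono[OF bx]) (auto simp: frac_le)
      show "\<psi> 1 \<le> \<psi> u" using Psi_class_mono[OF P] u by auto
    qed (use pos T(2) u fin in \<open>auto intro: stieltjes_tail_nonneg[OF bx]\<close>)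
    then show ?thesis using T(1)[of u] pos nonneg by (cases "T \<le> u") (auto simp: B'_def)
  qed
  then show ?thesis by (intro that[of B']) (simp add: psi_quotient_def)
qed

lemma psi_scale_functionE:
  assumes P: "Psi_class \<psi>" and C: "0 \<le> C"
  obtains s s' :: "real \<Rightarrow> real" where
    "\<And>u. 1 \<le> u \<Longrightarrow> (s has_real_derivative s' u) (at u)"
    "\<And>a b. 1 \<le> a \<Longrightarrow> continuous_on {a..b} s'"
    "\<And>u. 1 \<le> u \<Longrightarrow> s u / u \<le> s' u"
    "\<And>u. 1 \<le> u \<Longrightarrow> 4 * C * u * \<psi> u \<le> s u \<and> s u \<le> 8 * C * u * \<psi> (2 * u)"
proof -
  have bounds: "4 * C * u * \<psi> u \<le> 8 * C * u * psi_smooth \<psi> u \<and> 8 * C * u * psi_smooth \<psi> u \<le> 8 * C * u * \<psi> (2 * u)"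
    if u: "1 \<le> u" for u
  proof -
    have b: "\<psi> u / 2 \<le> psi_smooth \<psi> u" "psi_smooth \<psi> u \<le> \<psi> (2 * u)"
      using psi_smooth_bounds[OF P, of u] u by auto
    have c: "0 \<le> 8 * C * u" using u C by simp
    note mult_left_mono[OF b(1) c] mult_left_mono[OF b(2) c]
    moreover have "8 * C * u * (\<psi> u / 2) = 4 * C * u * \<psi> u" by simp
    ultimately show ?thesis by linarith
  qed
  have K: "0 \<le> 8 * C" using C by simp
  show ?thesis
    using that[OF has_real_derivative_psi_scale[OF P K] continuous_on_psi_scale_derivative[OF P K]
        psi_scale_derivative_ge[OF P K] bounds] .
qed

lemma eventually_tail_quotient_le:
  assumes P: "Psi_class \<psi>" and H: "((\<lambda>t. \<psi> (t * \<psi> t) / \<psi> t) \<longlongrightarrow> 1) at_top"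
    and bx: "bmeas x" and C: "1 \<le> C" "\<And>t. 0 < t \<Longrightarrow> rearr_integral x t \<le> C * \<psi> t"
    and s: "\<And>u. 1 \<le> u \<Longrightarrow> 4 * C * u * \<psi> u \<le> s u \<and> s u \<le> 8 * C * u * \<psi> (2 * u)"
    and e: "0 < \<epsilon>"
  shows "eventually (\<lambda>u. stieltjes_tail x (1/u) / \<psi> u \<le> (1 + \<epsilon>) * (rearr_integral x (s u) / \<psi> (s u))
    \<and> u \<le> s u \<and> s u \<le> 16 * C * u * \<psi> u) at_top"
proof -
  have C16: "0 < 16 * C" using C(1) by simp
  have "eventually (\<lambda>u. 1 \<le> u \<and> 1 \<le> \<psi> u \<and> \<psi> (2 * u) \<le> 2 * \<psi> u
      \<and> \<psi> (16 * C * (u * \<psi> u)) \<le> (1 + \<epsilon>) * \<psi> u \<and> \<psi> (16 * C * (u * \<psi> u)) \<le> (1 + 1) * \<psi> u) at_top"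
    using eventually_ge_at_top[of 1] Psi_class_eventually_ge[OF P, of 1] eventually_psi_double_le[OF P H]
      eventually_psi_scaled_tpsi_le[OF P H e C16] eventually_psi_scaled_tpsi_le[OF P H zero_less_one C16]
    by eventually_elim auto
  then show ?thesis
  proof eventually_elim
    case (elim u)
    then have u: "1 \<le> u" "0 < u" and \<psi>u: "1 \<le> \<psi> u" by auto
    have s_lo: "4 * C * u * \<psi> u \<le> s u" using s[OF u(1)] by simp
    have "s u \<le> 8 * C * u * (2 * \<psi> u)"
      using s[OF u(1)] elim C(1) u by (smt (verit) mult_left_mono mult_nonneg_nonneg)
    then have s_hi: "s u \<le> 16 * C * u * \<psi> u" by simp
    have "1 * 1 \<le> C * \<psi> u" using C(1) \<psi>u by (intro mult_mono) auto
    then have "u * 1 \<le> u * (4 * C * \<psi> u)" using u by (intro mult_left_mono) auto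
    then have u_s: "u \<le> s u" using s_lo by (simp add: mult_ac)
    have "\<psi> (s u) \<le> \<psi> (16 * C * (u * \<psi> u))" using Psi_class_mono[OF P] s_hi u_s u by (simp add: mult_ac)
    then have \<psi>s: "\<psi> (s u) \<le> (1 + \<epsilon>) * \<psi> u" "\<psi> (s u) \<le> 2 * \<psi> u" using elim by auto
    have \<psi>s0: "0 < \<psi> (s u)" using Psi_class_pos[OF P] u u_s by simp
    have "rearr_integral x (s u) \<le> C * (2 * \<psi> u)"
      using C(2)[of "s u"] \<psi>s(2) C(1) u u_s by (smt (verit) mult_left_mono)
    also have "\<dots> < 4 * C * \<psi> u" using C(1) \<psi>u by simp
    also have "\<dots> \<le> (1/u) * s u" using s_lo u by (simp add: field_simps)
    finally have "distfun x (1/u) \<le> ennreal (s u)"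
      using u u_s by (intro distfun_le_if_rearr_integral_less[OF bx]) (auto simp: mult.commute)
    then have "stieltjes_tail x (1/u) \<le> rearr_integral x (s u)"
      using u u_s by (intro stieltjes_tail_le_rearr_integral[OF bx]) auto
    then have "stieltjes_tail x (1/u) / \<psi> u \<le> (\<psi> (s u) / \<psi> u) * (rearr_integral x (s u) / \<psi> (s u))"
      using \<psi>u \<psi>s0 by (simp add: divide_right_mono)
    also have "\<dots> \<le> (1 + \<epsilon>) * (rearr_integral x (s u) / \<psi> (s u))"
      using \<psi>s \<psi>u \<psi>s0 rearr_integral_nonneg[OF bx]
      by (intro mult_right_mono) (auto simp: divide_le_eq)
    finally show ?case using u_s s_hi by simp
  qed
qed

lemma eventually_ln_scale_le:
  assumes P: "Psi_class \<psi>" and H: "((\<lambda>t. \<psi> (t * \<psi> t) / \<psi> t) \<longlongrightarrow> 1) at_top"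
    and K: "0 < K" and ev: "eventually (\<lambda>t. t \<le> s t \<and> s t \<le> K * t * \<psi> t) at_top" and \<delta>: "0 < \<delta>"
  shows "eventually (\<lambda>t. ln (s t) - ln t \<le> \<delta> * ln t) at_top"
proof -
  have "eventually (\<lambda>t. ln K \<le> (\<delta> / 2) * ln t) at_top"
    using ln_at_top \<delta> unfolding filterlim_at_top
    by (auto elim!: eventually_mono[OF spec[of _ "ln K / (\<delta> / 2)"]] simp: field_simps)
  then show ?thesis
    using ev eventually_ln_psi_le[OF P H half_gt_zero[OF \<delta>]] eventually_ge_at_top[of 1]
      Psi_class_eventually_ge[OF P, of 1]
  proof eventually_elim
    case (elim t)
    have "ln (s t) \<le> ln (K * t * \<psi> t)" using elim by (intro ln_mono) auto
    also have "\<dots> = ln K + ln t + ln (\<psi> t)" using elim K by (simp add: ln_mult)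
    finally show ?case using elim by simp
  qed
qed

lemma generalised_limit_Mmean_tail_quotient_le:
  fixes \<psi> x s s' :: "real \<Rightarrow> real"
  assumes P: "Psi_class \<psi>" and H: "((\<lambda>t. \<psi> (t * \<psi> t) / \<psi> t) \<longlongrightarrow> 1) at_top"
    and g: "generalised_limit \<gamma>" and M: "M_psi \<psi> x"
    and C: "1 \<le> C" "\<And>t. 0 < t \<Longrightarrow> rearr_integral x t \<le> C * \<psi> t"
    and s: "\<And>u. 1 \<le> u \<Longrightarrow> (s has_real_derivative s' u) (at u)"
      "\<And>a b. 1 \<le> a \<Longrightarrow> continuous_on {a..b} s'" "\<And>u. 1 \<le> u \<Longrightarrow> s u / u \<le> s' u"
      "\<And>u. 1 \<le> u \<Longrightarrow> 4 * C * u * \<psi> u \<le> s u \<and> s u \<le> 8 * C * u * \<psi> (2 * u)"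
  shows "\<gamma> (Mmean (psi_quotient \<psi> (\<lambda>u. stieltjes_tail x (1/u))))
    \<le> \<gamma> (Mmean (psi_quotient \<psi> (rearr_integral x)))"
proof -
  have bx: "bmeas x" using M by (simp add: M_psi_def)
  define F where "F = (\<lambda>u. stieltjes_tail x (1/u))"
  have key: "eventually (\<lambda>u. F u / \<psi> u \<le> (1 + \<epsilon>) * (rearr_integral x (s u) / \<psi> (s u))
      \<and> u \<le> s u \<and> s u \<le> 16 * C * u * \<psi> u) at_top" if "0 < \<epsilon>" for \<epsilon>
    unfolding F_def by (rule eventually_tail_quotient_le[OF P H bx C s(4) that])
  have fin: "distfun x l < \<infinity>" if "0 < l" for l using M_psi_distfun_finite[OF P M that] .
  have "eventually (\<lambda>u. F u / \<psi> u \<le> 2 * C) at_top"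
    using key[OF zero_less_one] eventually_ge_at_top[of 1]
  proof eventually_elim
    case (elim u)
    then have "rearr_integral x (s u) / \<psi> (s u) \<le> C"
      using psi_quotient_rearr_integral_bounds[OF P bx C(2), of "s u"] psi_quotient_eq[of "s u"] by simp
    then show ?case using elim by simp
  qed
  then obtain B where Y1: "\<And>t. 0 \<le> psi_quotient \<psi> F t \<and> psi_quotient \<psi> F t \<le> B"
    using psi_quotient_tail_bounded[OF P bx fin] unfolding F_def by blast
  have F_mono: "F a \<le> F b" if "1 \<le> a" "a \<le> b" for a b
    unfolding F_def using that fin by (intro stieltjes_tail_antimono[OF bx]) (auto simp: frac_le)
  have Y2: "\<And>t. 0 \<le> psi_quotient \<psi> (rearr_integral x) t \<and> psi_quotient \<psi> (rearr_integral x) t \<le> C"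
    by (rule psi_quotient_rearr_integral_bounds[OF P bx C(2)])
  have Y1m: "psi_quotient \<psi> F \<in> borel_measurable borel" using F_mono by (rule borel_measurable_psi_quotient[OF P])
  have Y2m: "psi_quotient \<psi> (rearr_integral x) \<in> borel_measurable borel"
    by (intro borel_measurable_psi_quotient[OF P] rearr_integral_mono[OF bx])
  have "eventually (\<lambda>t. Mmean (psi_quotient \<psi> F) t - Mmean (psi_quotient \<psi> (rearr_integral x)) t \<le> \<eta>) at_top"
    if "0 < \<eta>" for \<eta>
  proof (rule Mmean_diff_eventually_le[OF Y1m Y1 Y2m Y2 s(1-3) _ _ that])
    show "eventually (\<lambda>u. psi_quotient \<psi> F u \<le> (1 + \<epsilon>) * psi_quotient \<psi> (rearr_integral x) (s u) \<and> u \<le> s u) at_top"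
      if "0 < \<epsilon>" for \<epsilon>
      using key[OF that] eventually_ge_at_top[of 1] by eventually_elim (simp add: psi_quotient_eq)
    show "eventually (\<lambda>t. ln (s t) - ln t \<le> \<delta> * ln t) at_top" if "0 < \<delta>" for \<delta>
      using key[OF zero_less_one] C(1) that
      by (intro eventually_ln_scale_le[OF P H, of "16 * C"]) (auto elim: eventually_mono)
  qed
  then have "\<gamma> (Mmean (psi_quotient \<psi> F)) \<le> \<gamma> (Mmean (psi_quotient \<psi> (rearr_integral x)))"
    by (rule generalised_limit_mono_eventually[OF g bmeas_Mmean[OF Y1m Y1] bmeas_Mmean[OF Y2m Y2]])
  then show ?thesis unfolding F_def .
qed

theorem lemma2p5:
  fixes \<psi> :: "real \<Rightarrow> real" and \<gamma> :: "(real \<Rightarrow> real) \<Rightarrow> real" and x :: "real \<Rightarrow> real"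
  assumes "Psi_class \<psi>"
    and "((\<lambda>t. \<psi> (t * \<psi> t) / \<psi> t) \<longlongrightarrow> 1) at_top"
    and "generalised_limit \<gamma>"
    and "M_psi \<psi> x"
    and "AE s in lebesgue. 0 < s \<longrightarrow> 0 \<le> x s"
  shows "dixmier_omega \<gamma> (\<lambda>t. (1 / \<psi> t) * stieltjes_tail x (1 / t)) \<le> dixmier_trace \<gamma> \<psi> x"
proof -
  obtain C where C: "1 \<le> C" "\<And>t. 0 < t \<Longrightarrow> rearr_integral x t \<le> C * \<psi> t"
    using M_psi_rearr_integral_le[OF assms(1,4)] by blast
  obtain s s' :: "real \<Rightarrow> real" where s:
    "\<And>u. 1 \<le> u \<Longrightarrow> (s has_real_derivative s' u) (at u)"
    "\<And>a b. 1 \<le> a \<Longrightarrow> continuous_on {a..b} s'" "\<And>u. 1 \<le> u \<Longrightarrow> s u / u \<le> s' u"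
    "\<And>u. 1 \<le> u \<Longrightarrow> 4 * C * u * \<psi> u \<le> s u \<and> s u \<le> 8 * C * u * \<psi> (2 * u)"
    using psi_scale_functionE[OF assms(1), of C] C(1) by auto
  have "\<gamma> (Mmean (psi_quotient \<psi> (\<lambda>u. stieltjes_tail x (1/u))))
      \<le> \<gamma> (Mmean (psi_quotient \<psi> (rearr_integral x)))"
    by (rule generalised_limit_Mmean_tail_quotient_le[OF assms(1-4) C s])
  then show ?thesis
    unfolding dixmier_trace_def dixmier_omega_def rearr_integral_def[symmetric] Mmean_psi_quotient .
qed

end
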